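(* Let $\psi(u,v)$ be a smooth function on $\mathbb R^2$ which, together with all its derivatives, has at most polynomial growth, and set $g(x)=\psi(|x|^2,|x|_{-1}^2)$, $x\in\mathbb R^N$. Then for every $\varepsilon>0$, $\widetilde Lg$ is $\widetilde\mu_\varepsilon$-integrable and $\int\widetilde Lg\,d\widetilde\mu_\varepsilon=0$.
   Context: Let $n\ge4$, $N=2n$, $1=\lambda_1=\lambda_2<\lambda_3=\lambda_4<\dots<\lambda_{N-1}=\lambda_N$. On $\mathbb R^N$: $\langle x,y\rangle=\sum x_\ell y_\ell$, $|x|^2=\sum x_\ell^2$, $\langle x,y\rangle_{-1}=\sum x_\ell y_\ell/\lambda_\ell$, $|x|_{-1}^2=\sum x_\ell^2/\lambda_\ell$. Fix $a>0$, $\delta_\ell\in(-1,0]$ with $\delta_{2i}=\delta_{2i-1}$, and $\widetilde L=\sum_\ell\lambda_\ell(\tfrac a2(1+\delta_\ell)\partial_\ell^2-x_\ell\partial_\ell)$. Let $b$ be a vector field with each $b(x)_\ell$ a quadratic form in $x$, $\operatorname{div}b=0$, $\langle x,b(x)\rangle=0=\langle x,b(x)\rangle_{-1}$; $B=\sum b(x)_\ell\partial_\ell$. With $\mathcal J$ the triples $J=(k,\ell,m)$ with $\lambda_k<\lambda_\ell<\lambda_m$, $T_J=\sum x_ax_b(1/\lambda_a-1/\lambda_b)\partial_c$ (sum over cyclic permutations $(a,b,c)$ of $J$), $R_i=x_{2i}\partial_{2i-1}-x_{2i-1}\partial_{2i}$; enumerate these as $Z_1,\dots,Z_M$, $\mathcal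 D=\frac12\sum Z_m^2$. Fix $\kappa\in(0,1]$, and $\widetilde{\mathcal L}^\varepsilon=\widetilde L+\varepsilon^{-1}(B+\kappa\mathcal D)$. It is known that for each $x$ the martingale problem for $\widetilde{\mathcal L}^\varepsilon$ on $C(\mathbb R_+,\mathbb R^N)$ started at $x$ (with test functions smooth compactly supported) is well posed, that the solutions form a strong Markov process, and that it has a unique stationary probability $\widetilde\mu_\varepsilon$, which satisfies $\int\exp\{|x|_{-1}^2/(2a)\}d\widetilde\mu_\varepsilon<\infty$. *)

theory Defs
  imports "HOL-Probability.Probability"
begin

definition pd :: "'N::finite \<Rightarrow> (real^'N \<Rightarrow> real) \<Rightarrow> real^'N \<Rightarrow> real" where
  "pd k f x = deriv (\<lambda>t. f (x + t *\<^sub>R axis k 1)) 0"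

fun pds :: "'N::finite list \<Rightarrow> (real^'N \<Rightarrow> real) \<Rightarrow> real^'N \<Rightarrow> real" where
  "pds [] f = f"
| "pds (k # ks) f = pd k (pds ks f)"

definition smooth :: "(real^'N::finite \<Rightarrow> real) \<Rightarrow> bool" where
  "smooth f \<longleftrightarrow> (\<forall>ks. continuous_on UNIV (pds ks f) \<and>
      (\<forall>k x. ((\<lambda>t. pds ks f (x + t *\<^sub>R axis k 1)) has_real_derivative pds (k # ks) f x) (at 0)))"

definition test_fun :: "(real^'N::finite \<Rightarrow> real) \<Rightarrow> bool" where
  "test_fun f \<longleftrightarrow> smooth f \<and> (\<exists>r. \<forall>x. r < norm x \<longrightarrow> f x = 0)"

definition poly_growth_smooth :: "(real^'M::finite \<Rightarrow> real) \<Rightarrow> bool" where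
  "poly_growth_smooth \<psi> \<longleftrightarrow> smooth \<psi> \<and>
     (\<forall>ks. \<exists>C (m::nat). \<forall>y. \<bar>pds ks \<psi> y\<bar> \<le> C * (1 + norm y) ^ m)"

definition wnorm2 :: "('N::finite \<Rightarrow> real) \<Rightarrow> real^'N \<Rightarrow> real" where
  "wnorm2 lam x = (\<Sum>l\<in>UNIV. (x $ l)^2 / lam l)"

definition winner :: "('N::finite \<Rightarrow> real) \<Rightarrow> real^'N \<Rightarrow> real^'N \<Rightarrow> real" where
  "winner lam x y = (\<Sum>l\<in>UNIV. x $ l * y $ l / lam l)"

definition Ltil :: "('N::finite \<Rightarrow> real) \<Rightarrow> real \<Rightarrow> ('N \<Rightarrow> real)
     \<Rightarrow> (real^'N \<Rightarrow> real) \<Rightarrow> real^'N \<Rightarrow> real" where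
  "Ltil lam a del f x = (\<Sum>l\<in>UNIV. lam l * (a/2 * (1 + del l) * pd l (pd l f) x - x $ l * pd l f x))"

definition Bop :: "(real^'N::finite \<Rightarrow> real^'N) \<Rightarrow> (real^'N \<Rightarrow> real) \<Rightarrow> real^'N \<Rightarrow> real" where
  "Bop b f x = (\<Sum>l\<in>UNIV. b x $ l * pd l f x)"

definition divergence :: "(real^'N::finite \<Rightarrow> real^'N) \<Rightarrow> real^'N \<Rightarrow> real" where
  "divergence b x = (\<Sum>l\<in>UNIV. pd l (\<lambda>y. b y $ l) x)"

definition triples :: "('N::finite \<Rightarrow> real) \<Rightarrow> ('N \<times> 'N \<times> 'N) set" where
  "triples lam = {(k,l,m). lam k < lam l \<and> lam l < lam m}"

definition TJ :: "('N::finite \<Rightarrow> real) \<Rightarrow> 'N \<times> 'N \<times> 'N \<Rightarrow> (real^'N \<Rightarrow> real) \<Rightarrow> real^'N \<Rightarrow> real" where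
  "TJ lam J f x = (case J of (k,l,m) \<Rightarrow>
       x$k * x$l * (1/lam k - 1/lam l) * pd m f x
     + x$l * x$m * (1/lam l - 1/lam m) * pd k f x
     + x$m * x$k * (1/lam m - 1/lam k) * pd l f x)"

text \<open>Coordinates of R^N, N = 2n, are indexed by \<open>'i \<times> bool\<close>: \<open>(i,False)\<close> is coordinate 2i-1
  and \<open>(i,True)\<close> is coordinate 2i.  \<open>R_i = x_{2i} d_{2i-1} - x_{2i-1} d_{2i}\<close>.\<close>
definition Rop :: "'i \<Rightarrow> (real^('i::finite \<times> bool) \<Rightarrow> real) \<Rightarrow> real^('i \<times> bool) \<Rightarrow> real" where
  "Rop i f x = x $ (i,True) * pd (i,False) f x - x $ (i,False) * pd (i,True) f x"

definition Dop :: "(('i::finite \<times> bool) \<Rightarrow> real) \<Rightarrow> (real^('i \<times> bool) \<Rightarrow> real) \<Rightarrow> real^('i \<times> bool) \<Rightarrow> real" where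
  "Dop lam f x = 1/2 * ((\<Sum>J\<in>triples lam. TJ lam J (TJ lam J f) x) + (\<Sum>i\<in>UNIV. Rop i (Rop i f) x))"

definition Leps :: "(('i::finite \<times> bool) \<Rightarrow> real) \<Rightarrow> real \<Rightarrow> (('i \<times> bool) \<Rightarrow> real)
   \<Rightarrow> (real^('i \<times> bool) \<Rightarrow> real^('i \<times> bool)) \<Rightarrow> real \<Rightarrow> real
   \<Rightarrow> (real^('i \<times> bool) \<Rightarrow> real) \<Rightarrow> real^('i \<times> bool) \<Rightarrow> real" where
  "Leps lam a del b \<kappa> \<epsilon> f x = Ltil lam a del f x + (1/\<epsilon>) * (Bop b f x + \<kappa> * Dop lam f x)"

text \<open>Continuous paths on \<open>[0,\<infinity>)\<close>, canonically extended as constant to negative times.\<close>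
definition cpaths :: "(real \<Rightarrow> 'a::topological_space) set" where
  "cpaths = {\<omega>. continuous_on {0..} \<omega> \<and> (\<forall>t<0. \<omega> t = \<omega> 0)}"

definition path_space :: "(real \<Rightarrow> 'a::topological_space) measure" where
  "path_space = sigma cpaths {(\<lambda>\<omega>. \<omega> t) -` A \<inter> cpaths | t A. 0 \<le> t \<and> A \<in> sets borel}"

definition nat_filt :: "real \<Rightarrow> (real \<Rightarrow> 'a::topological_space) measure" where
  "nat_filt s = sigma cpaths {(\<lambda>\<omega>. \<omega> t) -` A \<inter> cpaths | t A. 0 \<le> t \<and> t \<le> s \<and> A \<in> sets borel}"

definition martingale :: "'w measure \<Rightarrow> (real \<Rightarrow> 'w measure) \<Rightarrow> (real \<Rightarrow> 'w \<Rightarrow> real) \<Rightarrow> bool" where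
  "martingale M F X \<longleftrightarrow>
     (\<forall>t\<ge>0. sigma_finite_subalgebra M (F t) \<and> integrable M (X t) \<and> X t \<in> borel_measurable (F t)) \<and>
     (\<forall>s t. 0 \<le> s \<longrightarrow> s \<le> t \<longrightarrow> (AE \<omega> in M. real_cond_exp M (F s) (X t) \<omega> = X s \<omega>))"

definition solves_MP :: "((real^'N::finite \<Rightarrow> real) \<Rightarrow> real^'N \<Rightarrow> real) \<Rightarrow> real^'N
     \<Rightarrow> (real \<Rightarrow> real^'N) measure \<Rightarrow> bool" where
  "solves_MP L x P \<longleftrightarrow> prob_space P \<and> sets P = sets path_space \<and> (AE \<omega> in P. \<omega> 0 = x) \<and>
     (\<forall>f. test_fun f \<longrightarrow>
        martingale P nat_filt (\<lambda>t \<omega>. f (\<omega> t) - f (\<omega> 0) - integral {0..t} (\<lambda>r. L f (\<omega> r))))"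

definition well_posed_MP :: "((real^'N::finite \<Rightarrow> real) \<Rightarrow> real^'N \<Rightarrow> real) \<Rightarrow> bool" where
  "well_posed_MP L \<longleftrightarrow> (\<forall>x. \<exists>!P. solves_MP L x P)"

definition stationary_prob :: "((real^'N::finite \<Rightarrow> real) \<Rightarrow> real^'N \<Rightarrow> real) \<Rightarrow> (real^'N) measure \<Rightarrow> bool" where
  "stationary_prob L \<mu> \<longleftrightarrow> prob_space \<mu> \<and> sets \<mu> = sets borel \<and>
     (\<exists>P. (\<forall>x. solves_MP L x (P x)) \<and>
        (\<forall>t\<ge>0. \<forall>A\<in>sets borel.
           (\<lambda>x. emeasure (P x) {\<omega>\<in>space (P x). \<omega> t \<in> A}) \<in> borel_measurable borel \<and>
           (\<integral>\<^sup>+x. emeasure (P x) {\<omega>\<in>space (P x). \<omega> t \<in> A} \<partial>\<mu>) = emeasure \<mu> A))"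

end

(* The function g depends on x only through (|x|^2, |x|^2_{-1}). Such functions are annihilated by B
   (b(x) is orthogonal to x in both inner products), by every R_i (since lambda_{2i-1} = lambda_{2i})
   and by every T_J (its three cyclic terms cancel), so L^eps g = L~ g. For a test function f,
   stationarity gives int (P_t f - f)/t dmu = 0, and the martingale problem lets these difference
   quotients converge boundedly to L^eps f as t -> 0, whence int L^eps f dmu = 0. Finally g is
   approximated by g_R = g h(R - |x|^2), h(t) = exp(-1/t) for t > 0: each g_R is a test function,
   and L~ g_R is bounded by a polynomial in |x|^2 uniformly in R, hence dominated by a multiple of
   exp(|x|^2_{-1}/(2a)), which is mu-integrable. *)

theory Submission
  imports Defs "HOL-Computational_Algebra.Polynomial"
begin

section \<open>Partial derivatives and smooth functions\<close>

lemma pds_append: "pds (ks @ ms) f = pds ks (pds ms f)"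
  by (induction ks) auto

lemma pd_eqI:
  assumes "((\<lambda>t. f (x + t *\<^sub>R axis k 1)) has_real_derivative D) (at 0)"
  shows "pd k f x = D"
  using assms unfolding pd_def by (rule DERIV_imp_deriv)

lemma pd_const: "pd k (\<lambda>x::real^'N::finite. c) = (\<lambda>x. 0)"
  by (rule ext, rule pd_eqI) simp

lemma smooth_pds: "smooth f \<Longrightarrow> smooth (pds ks f)"
  unfolding smooth_def by (metis pds_append append_Cons)

lemma smooth_pd: "smooth f \<Longrightarrow> smooth (pd k f)"
  using smooth_pds[of f "[k]"] by simp

lemma smooth_imp_continuous_on: "smooth f \<Longrightarrow> continuous_on UNIV f"
  unfolding smooth_def by (metis pds.simps(1))

lemma smooth_has_pd:
  "smooth f \<Longrightarrow> ((\<lambda>t. f (x + t *\<^sub>R axis k 1)) has_real_derivative pd k f x) (at 0)"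
  unfolding smooth_def by (metis pds.simps)

definition C1_pds_in :: "(real^'N::finite \<Rightarrow> real) set \<Rightarrow> (real^'N \<Rightarrow> real) \<Rightarrow> bool" where
  "C1_pds_in A f \<longleftrightarrow> continuous_on UNIV f \<and>
     (\<forall>k x. ((\<lambda>t. f (x + t *\<^sub>R axis k 1)) has_real_derivative pd k f x) (at 0)) \<and> (\<forall>k. pd k f \<in> A)"

lemma smooth_if_C1_pds_in:
  assumes closed: "\<And>g. g \<in> A \<Longrightarrow> C1_pds_in A g" and f: "f \<in> A"
  shows "smooth f"
proof -
  have "pds ks f \<in> A" for ks
    by (induction ks) (use f closed in \<open>auto simp: C1_pds_in_def\<close>)
  then show ?thesis using closed unfolding smooth_def C1_pds_in_def by auto
qed

inductive_set gen_alg :: "(real^'N::finite \<Rightarrow> real) set \<Rightarrow> (real^'N \<Rightarrow> real) set" for B where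
  base: "b \<in> B \<Longrightarrow> b \<in> gen_alg B"
| const: "(\<lambda>x. c) \<in> gen_alg B"
| add: "f \<in> gen_alg B \<Longrightarrow> g \<in> gen_alg B \<Longrightarrow> (\<lambda>x. f x + g x) \<in> gen_alg B"
| mult: "f \<in> gen_alg B \<Longrightarrow> g \<in> gen_alg B \<Longrightarrow> (\<lambda>x. f x * g x) \<in> gen_alg B"

lemma C1_pds_in_gen_alg:
  fixes B :: "(real^'N::finite \<Rightarrow> real) set"
  assumes B: "\<And>b. b \<in> B \<Longrightarrow> C1_pds_in (gen_alg B) b" and f: "f \<in> gen_alg B"
  shows "C1_pds_in (gen_alg B) f"
  using f
proof induction
  case (base b)
  then show ?case by (rule B)
next
  case (const c)
  have "(\<lambda>x::real^'N. 0) \<in> gen_alg B" by (rule gen_alg.const)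
  then show ?case by (simp add: C1_pds_in_def pd_const)
next
  case (add f g)
  then have d: "((\<lambda>t. f (x + t *\<^sub>R axis k 1) + g (x + t *\<^sub>R axis k 1))
      has_real_derivative pd k f x + pd k g x) (at 0)" for k x
    by (auto simp: C1_pds_in_def intro!: derivative_eq_intros)
  have "pd k (\<lambda>x. f x + g x) = (\<lambda>x. pd k f x + pd k g x)" for k
    using pd_eqI[OF d] by auto
  then show ?case
    using add d by (auto simp: C1_pds_in_def intro!: continuous_intros gen_alg.add)
next
  case (mult f g)
  then have d: "((\<lambda>t. f (x + t *\<^sub>R axis k 1) * g (x + t *\<^sub>R axis k 1))
      has_real_derivative pd k f x * g x + f x * pd k g x) (at 0)" for k x
    by (auto simp: C1_pds_in_def intro!: derivative_eq_intros)
  have "pd k (\<lambda>x. f x * g x) = (\<lambda>x. pd k f x * g x + f x * pd k g x)" for k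
    using pd_eqI[OF d] by auto
  then show ?case
    using mult d by (auto simp: C1_pds_in_def intro!: continuous_intros gen_alg.add gen_alg.mult)
qed

lemma smooth_gen_alg:
  assumes "\<And>b. b \<in> B \<Longrightarrow> C1_pds_in (gen_alg B) b" and "f \<in> gen_alg B"
  shows "smooth f"
  using smooth_if_C1_pds_in[of "gen_alg B"] C1_pds_in_gen_alg assms by blast

lemma pd_add:
  assumes "smooth f" "smooth g"
  shows "pd k (\<lambda>x. f x + g x) = (\<lambda>x. pd k f x + pd k g x)"
  by (rule ext, rule pd_eqI)
    (use DERIV_add[OF smooth_has_pd[OF assms(1)] smooth_has_pd[OF assms(2)]] in simp)

lemma pd_mult:
  assumes "smooth f" "smooth g"
  shows "pd k (\<lambda>x. f x * g x) = (\<lambda>x. pd k f x * g x + f x * pd k g x)"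
  by (rule ext, rule pd_eqI)
    (use DERIV_mult[OF smooth_has_pd[OF assms(1)] smooth_has_pd[OF assms(2)]] in \<open>simp add: mult.commute\<close>)

lemma smooth_mult:
  assumes f: "smooth f" and g: "smooth g"
  shows "smooth (\<lambda>x. f x * g x)"
proof (rule smooth_gen_alg)
  let ?B = "range (\<lambda>ks. pds ks f) \<union> range (\<lambda>ks. pds ks g)"
  show "C1_pds_in (gen_alg ?B) b" if "b \<in> ?B" for b
  proof -
    from that obtain h ks where h: "smooth h" "b = pds ks h" "range (\<lambda>ks. pds ks h) \<subseteq> ?B"
      using f g by blast
    have "pd k b \<in> gen_alg ?B" for k
      using h(2,3) by (metis gen_alg.base pds.simps(2) range_eqI subsetD)
    then show ?thesis
      using smooth_imp_continuous_on[of b] smooth_has_pd[of b] smooth_pds[OF h(1)] h(2)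
      by (auto simp: C1_pds_in_def)
  qed
  show "(\<lambda>x. f x * g x) \<in> gen_alg ?B"
    by (intro gen_alg.mult gen_alg.base) (metis Un_iff pds.simps(1) rangeI)+
qed

lemma pd_pd_mult:
  assumes f: "smooth f" and g: "smooth g"
  shows "pd j (pd i (\<lambda>x. f x * g x)) x =
    pd j (pd i f) x * g x + pd i f x * pd j g x + (pd j f x * pd i g x + f x * pd j (pd i g) x)"
  using f g
  by (simp add: pd_mult pd_add smooth_mult smooth_pd pd_mult[OF smooth_pd[OF f] g] pd_mult[OF f smooth_pd[OF g]])

section \<open>The flat function \<open>exp (-1/t)\<close>\<close>

lemma poly_times_exp_neg_tendsto_0: "((\<lambda>s. poly p s * exp (- s)) \<longlongrightarrow> (0::real)) at_top"
proof -
  have "((\<lambda>s. \<Sum>i\<le>degree p. coeff p i * (s ^ i / exp s)) \<longlongrightarrow> (\<Sum>i\<le>degree p. coeff p i * 0)) at_top"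
    by (intro tendsto_sum tendsto_mult tendsto_const tendsto_power_div_exp_0)
  moreover have "(\<Sum>i\<le>degree p. coeff p i * (s ^ i / exp s)) = poly p s * exp (- s)" for s
    by (simp add: poly_altdef exp_minus divide_inverse sum_distrib_right mult.assoc)
  ultimately show ?thesis by simp
qed

lemma poly_times_exp_neg_bounded: "\<exists>M. \<forall>s\<ge>0. \<bar>poly p s * exp (- s)\<bar> \<le> (M::real)"
proof -
  from poly_times_exp_neg_tendsto_0[of p] have "\<forall>\<^sub>F s in at_top. dist (poly p s * exp (- s)) 0 < 1"
    by (rule tendstoD) simp
  then obtain S where S: "\<And>s. s \<ge> S \<Longrightarrow> \<bar>poly p s * exp (- s)\<bar> < 1"
    unfolding eventually_at_top_linorder by auto
  have "compact ((\<lambda>s. poly p s * exp (- s)) ` {0..S})"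
    by (intro compact_continuous_image continuous_intros) auto
  then obtain M where M: "\<And>y. y \<in> (\<lambda>s. poly p s * exp (- s)) ` {0..S} \<Longrightarrow> norm y \<le> M"
    using compact_imp_bounded bounded_iff by metis
  have "\<bar>poly p s * exp (- s)\<bar> \<le> max M 1" if "s \<ge> 0" for s
    using M[of "poly p s * exp (- s)"] S[of s] that by (cases "s \<le> S") force+
  then show ?thesis by blast
qed

text \<open>\<open>expinv j\<close> is the \<open>j\<close>-th derivative of the flat function \<open>exp (-1/t)\<close> (for \<open>t > 0\<close>, and \<open>0\<close>
  for \<open>t \<le> 0\<close>): differentiating \<open>p (1/t) exp (-1/t)\<close> gives \<open>q (1/t) exp (-1/t)\<close> with
  \<open>q s = s\<^sup>2 (p s - p' s)\<close>.\<close>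

fun expinv_poly :: "nat \<Rightarrow> real poly" where
  "expinv_poly 0 = 1"
| "expinv_poly (Suc j) = [:0,0,1:] * (expinv_poly j - pderiv (expinv_poly j))"

definition expinv :: "nat \<Rightarrow> real \<Rightarrow> real" where
  "expinv j t = (if t > 0 then poly (expinv_poly j) (inverse t) * exp (- inverse t) else 0)"

lemma expinv_nonpos: "t \<le> 0 \<Longrightarrow> expinv j t = 0"
  by (simp add: expinv_def)

lemma has_real_derivative_expinv_pos:
  assumes "t > 0"
  shows "(expinv j has_real_derivative expinv (Suc j) t) (at t)"
proof -
  let ?p = "expinv_poly j"
  have "((\<lambda>t. poly ?p (inverse t) * exp (- inverse t)) has_real_derivative
      poly (pderiv ?p) (inverse t) * - (inverse t ^ 2) * exp (- inverse t)
      + poly ?p (inverse t) * (exp (- inverse t) * inverse t ^ 2)) (at t)"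
    using assms by (auto intro!: derivative_eq_intros simp: power2_eq_square)
  also have "poly (pderiv ?p) (inverse t) * - (inverse t ^ 2) * exp (- inverse t)
      + poly ?p (inverse t) * (exp (- inverse t) * inverse t ^ 2) = expinv (Suc j) t"
    using assms by (simp add: expinv_def poly_diff power2_eq_square algebra_simps)
  finally show ?thesis
    by (rule has_field_derivative_transform_within_open[where S="{0<..}"])
      (use assms in \<open>auto simp: expinv_def\<close>)
qed

lemma has_real_derivative_expinv_neg:
  assumes "t < 0"
  shows "(expinv j has_real_derivative expinv (Suc j) t) (at t)"
proof -
  have "((\<lambda>t. 0) has_real_derivative expinv (Suc j) t) (at t)" using assms by (simp add: expinv_def)
  then show ?thesis
    by (rule has_field_derivative_transform_within_open[where S="{..<0}"])
      (use assms in \<open>auto simp: expinv_def\<close>)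
qed

lemma has_real_derivative_expinv_0: "(expinv j has_real_derivative expinv (Suc j) 0) (at 0)"
proof -
  have "((\<lambda>y. (expinv j y - expinv j 0) / (y - 0)) \<longlongrightarrow> 0) (at 0)"
  proof (rule filterlim_split_at)
    show "((\<lambda>y. (expinv j y - expinv j 0) / (y - 0)) \<longlongrightarrow> 0) (at_left 0)"
    proof (rule Lim_transform_eventually[OF tendsto_const])
      show "\<forall>\<^sub>F y in at_left 0. 0 = (expinv j y - expinv j 0) / (y - 0)"
        unfolding eventually_at_left_field by (rule exI[of _ "-1"]) (auto simp: expinv_def)
    qed
  next
    have "((\<lambda>s. poly (pCons 0 (expinv_poly j)) s * exp (- s)) \<longlongrightarrow> 0) at_top"
      by (rule poly_times_exp_neg_tendsto_0)
    then have "((\<lambda>y. poly (pCons 0 (expinv_poly j)) (inverse y) * exp (- inverse y)) \<longlongrightarrow> 0) (at_right 0)"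
      by (rule filterlim_compose[OF _ filterlim_inverse_at_top_right])
    then show "((\<lambda>y. (expinv j y - expinv j 0) / (y - 0)) \<longlongrightarrow> 0) (at_right 0)"
    proof (rule Lim_transform_eventually)
      show "\<forall>\<^sub>F y in at_right 0. poly (pCons 0 (expinv_poly j)) (inverse y) * exp (- inverse y)
          = (expinv j y - expinv j 0) / (y - 0)"
        unfolding eventually_at_right_field by (rule exI[of _ 1]) (auto simp: expinv_def field_simps)
    qed
  qed
  moreover have "expinv (Suc j) 0 = 0" by (simp add: expinv_def)
  ultimately show ?thesis by (simp add: has_field_derivative_iff)
qed

lemma has_real_derivative_expinv: "(expinv j has_real_derivative expinv (Suc j) t) (at t)"
  using has_real_derivative_expinv_pos has_real_derivative_expinv_neg has_real_derivative_expinv_0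
  by (cases "t > 0"; cases "t < 0") auto

lemma continuous_on_expinv: "continuous_on UNIV (expinv j)"
  using has_real_derivative_expinv DERIV_isCont continuous_at_imp_continuous_on by blast

lemma expinv_bounded: "\<exists>M. \<forall>t. \<bar>expinv j t\<bar> \<le> M"
proof -
  obtain M where M: "\<And>s. s \<ge> 0 \<Longrightarrow> \<bar>poly (expinv_poly j) s * exp (- s)\<bar> \<le> M"
    using poly_times_exp_neg_bounded by blast
  have "\<bar>expinv j t\<bar> \<le> max M 0" for t
    using M[of "inverse t"] by (auto simp: expinv_def)
  then show ?thesis by blast
qed

lemma expinv_tendsto_at_top: "(expinv j \<longlongrightarrow> poly (expinv_poly j) 0) at_top"
proof -
  have i: "((\<lambda>t::real. inverse t) \<longlongrightarrow> 0) at_top"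
    by (rule tendsto_inverse_0_at_top[OF filterlim_ident])
  have "((\<lambda>t. poly (expinv_poly j) (inverse t) * exp (- inverse t)) \<longlongrightarrow> poly (expinv_poly j) 0 * exp (- 0)) at_top"
    by (intro tendsto_intros i isCont_tendsto_compose[OF _ i]) auto
  moreover have "\<forall>\<^sub>F t in at_top. poly (expinv_poly j) (inverse t) * exp (- inverse t) = expinv j t"
    unfolding eventually_at_top_linorder by (rule exI[of _ 1]) (auto simp: expinv_def)
  ultimately show ?thesis by (simp add: Lim_transform_eventually)
qed

section \<open>Functions of \<open>(|x|\<^sup>2, |x|\<^sup>2\<^sub>-\<^sub>1)\<close>\<close>

lemma smooth_has_derivative_2:
  fixes \<Psi> :: "real^2 \<Rightarrow> real"
  assumes sm: "smooth \<Psi>"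
  shows "(\<Psi> has_derivative (\<lambda>h. h$1 * pd 1 \<Psi> p + h$2 * pd 2 \<Psi> p)) (at p)"
proof -
  define e1 :: "real^2" where "e1 = axis 1 1"
  define e2 :: "real^2" where "e2 = axis 2 1"
  define f where "f u v = \<Psi> (u *\<^sub>R e1 + v *\<^sub>R e2)" for u v
  have split: "y = (y$1) *\<^sub>R e1 + (y$2) *\<^sub>R e2" for y :: "real^2"
    by (simp add: vec_eq_iff forall_2 axis_def e1_def e2_def)
  have line: "((\<lambda>u. \<Psi> (q + (u - u0) *\<^sub>R axis k 1)) has_real_derivative pd k \<Psi> q) (at u0)" for q u0 k
    using DERIV_chain2[OF _ DERIV_diff[OF DERIV_ident DERIV_const], of "\<lambda>t. \<Psi> (q + t *\<^sub>R axis k 1)"]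
      smooth_has_pd[OF sm, of q k] by simp
  have bl: "blinfun_apply (c *\<^sub>R (id_blinfun::real\<Rightarrow>\<^sub>Lreal)) = (*) c" for c
    by (rule ext) (simp add: scaleR_blinfun.rep_eq)
  have fx: "((\<lambda>u. f u (p$2)) has_derivative (*) (pd 1 \<Psi> p)) (at (p$1))"
  proof -
    have "p + (u - p$1) *\<^sub>R axis 1 1 = u *\<^sub>R e1 + p$2 *\<^sub>R e2" for u
      by (simp add: vec_eq_iff forall_2 e1_def e2_def axis_def algebra_simps)
    then show ?thesis
      using line[of p "p$1" 1] by (simp add: has_field_derivative_def f_def)
  qed
  have fy: "((\<lambda>v. f u v) has_derivative blinfun_apply (pd 2 \<Psi> (u *\<^sub>R e1 + v *\<^sub>R e2) *\<^sub>R id_blinfun)) (at v)"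
    for u v
  proof -
    have eq: "(u *\<^sub>R e1 + v *\<^sub>R e2) + (w - v) *\<^sub>R axis 2 1 = u *\<^sub>R e1 + w *\<^sub>R e2" for w
      by (simp add: e2_def algebra_simps)
    show ?thesis
      using line[of "u *\<^sub>R e1 + v *\<^sub>R e2" v 2] by (simp only: has_field_derivative_def bl f_def eq)
  qed
  have "continuous_on UNIV (\<lambda>z::real\<times>real. pd 2 \<Psi> (fst z *\<^sub>R e1 + snd z *\<^sub>R e2) *\<^sub>R (id_blinfun::real\<Rightarrow>\<^sub>Lreal))"
    by (intro continuous_intros continuous_on_compose2[OF smooth_imp_continuous_on[OF smooth_pd[OF sm]]]) auto
  then have cont: "continuous (at (p$1, p$2) within UNIV \<times> UNIV)
      (\<lambda>(u, v). pd 2 \<Psi> (u *\<^sub>R e1 + v *\<^sub>R e2) *\<^sub>R (id_blinfun::real\<Rightarrow>\<^sub>Lreal))"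
    unfolding continuous_on_eq_continuous_within case_prod_beta' by auto
  have "((\<lambda>(u, v). f u v) has_derivative (\<lambda>(tu, tv). tu * pd 1 \<Psi> p + tv * pd 2 \<Psi> p)) (at (p$1, p$2))"
    using has_derivative_partialsI[OF fx fy cont] split[of p] by (simp add: bl mult.commute)
  moreover have "((\<lambda>y. (y$1, y$2)) has_derivative (\<lambda>y. (y$1, y$2))) (at p)"
    by (intro bounded_linear_imp_has_derivative bounded_linear_Pair bounded_linear_vec_nth)
  ultimately have "((\<lambda>(u, v). f u v) \<circ> (\<lambda>y. (y$1, y$2)) has_derivative
      (\<lambda>(tu, tv). tu * pd 1 \<Psi> p + tv * pd 2 \<Psi> p) \<circ> (\<lambda>y. (y$1, y$2))) (at p)"
    by (intro diff_chain_at) simp_all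
  moreover have "(\<lambda>(u, v). f u v) \<circ> (\<lambda>y. (y$1, y$2)) = \<Psi>"
    using split by (simp add: o_def f_def)
  ultimately show ?thesis by (simp add: o_def)
qed

definition sq_norms :: "('N::finite \<Rightarrow> real) \<Rightarrow> real^'N \<Rightarrow> real^2" where
  "sq_norms lam x = vector [(norm x)^2, wnorm2 lam x]"

lemma vector2_eq: "(vector [a, b] :: real^2) = a *\<^sub>R axis 1 1 + b *\<^sub>R axis 2 1"
  by (simp add: vec_eq_iff forall_2 axis_def)

lemma norm_power2_eq_sum: "(norm (x::real^'N::finite))^2 = (\<Sum>l\<in>UNIV. (x$l)^2)"
  unfolding power2_norm_eq_inner by (simp add: inner_vec_def power2_eq_square)

lemma continuous_on_sq_norms: "continuous_on UNIV (sq_norms lam)"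
  unfolding sq_norms_def vector2_eq wnorm2_def divide_inverse by (intro continuous_intros)

lemma sq_norms_1: "sq_norms lam x $ 1 = (norm x)^2"
  by (simp add: sq_norms_def)

lemma sum_shift_power2:
  fixes x :: "real^'N::finite" and c :: "'N \<Rightarrow> real"
  shows "(\<Sum>l\<in>UNIV. ((x + t *\<^sub>R axis k 1) $ l)^2 * c l) = (\<Sum>l\<in>UNIV. (x$l)^2 * c l) + (2*t*x$k + t^2) * c k"
proof -
  have "((x + t *\<^sub>R axis k 1) $ l)^2 * c l = (x$l)^2 * c l + (if l = k then (2*t*x$k + t^2) * c k else 0)" for l
    by (auto simp: axis_def power2_eq_square algebra_simps)
  then show ?thesis by (simp add: sum.distrib)
qed

lemma sq_norms_shift:
  "sq_norms lam (x + t *\<^sub>R axis k 1) = sq_norms lam x + (2*t*x$k + t^2) *\<^sub>R vector [1, 1/lam k]"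
  using sum_shift_power2[of x t k "\<lambda>_. 1"] sum_shift_power2[of x t k "\<lambda>l. 1 / lam l"]
  by (simp add: sq_norms_def norm_power2_eq_sum wnorm2_def vec_eq_iff forall_2)

lemma has_pd_comp_sq_norms:
  fixes \<Psi> :: "real^2 \<Rightarrow> real"
  assumes sm: "smooth \<Psi>"
  shows "((\<lambda>t. \<Psi> (sq_norms lam (x + t *\<^sub>R axis k 1))) has_real_derivative
      2 * x$k * (pd 1 \<Psi> (sq_norms lam x) + pd 2 \<Psi> (sq_norms lam x) / lam k)) (at 0)"
proof -
  let ?q = "sq_norms lam x"
  define w :: "real^2" where "w = vector [1, 1/lam k]"
  define c where "c t = ?q + (2*t*x$k + t^2) *\<^sub>R w" for t
  have "(c has_derivative (\<lambda>h. (h * (2 * x$k)) *\<^sub>R w)) (at 0)"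
    unfolding c_def by (auto intro!: derivative_eq_intros)
  moreover have "(\<Psi> has_derivative (\<lambda>h. h$1 * pd 1 \<Psi> ?q + h$2 * pd 2 \<Psi> ?q)) (at (c 0))"
    using smooth_has_derivative_2[OF sm, of ?q] by (simp add: c_def)
  ultimately have "(\<Psi> \<circ> c has_derivative
      (\<lambda>h. h$1 * pd 1 \<Psi> ?q + h$2 * pd 2 \<Psi> ?q) \<circ> (\<lambda>h. (h * (2 * x$k)) *\<^sub>R w)) (at 0)"
    by (rule diff_chain_at)
  moreover have "(\<lambda>h. h$1 * pd 1 \<Psi> ?q + h$2 * pd 2 \<Psi> ?q) \<circ> (\<lambda>h. (h * (2 * x$k)) *\<^sub>R w)
      = (*) (2 * x$k * (pd 1 \<Psi> ?q + pd 2 \<Psi> ?q / lam k))"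
    by (auto simp: w_def algebra_simps)
  moreover have "\<Psi> \<circ> c = (\<lambda>t. \<Psi> (sq_norms lam (x + t *\<^sub>R axis k 1)))"
    by (auto simp: c_def w_def sq_norms_shift)
  ultimately show ?thesis
    by (simp add: has_field_derivative_def)
qed

lemma pd_comp_sq_norms:
  assumes "smooth \<Psi>"
  shows "pd k (\<lambda>x. \<Psi> (sq_norms lam x)) =
    (\<lambda>x. 2 * x$k * (pd 1 \<Psi> (sq_norms lam x) + pd 2 \<Psi> (sq_norms lam x) / lam k))"
  by (rule ext, rule pd_eqI, rule has_pd_comp_sq_norms[OF assms])

lemma has_pd_coord: "((\<lambda>t. (x + t *\<^sub>R axis k 1) $ j) has_real_derivative (if j = k then 1 else 0)) (at 0)"
  by (simp add: axis_def) (auto intro!: derivative_eq_intros)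

lemma smooth_comp_sq_norms:
  fixes \<Psi> :: "real^2 \<Rightarrow> real" and lam :: "'N::finite \<Rightarrow> real"
  assumes sm: "smooth \<Psi>"
  shows "smooth (\<lambda>x. \<Psi> (sq_norms lam x))"
proof -
  define B :: "(real^'N \<Rightarrow> real) set" where
    "B = {(\<lambda>x. \<Phi> (sq_norms lam x)) | \<Phi>. smooth \<Phi>} \<union> range (\<lambda>j x. x $ j)"
  have comp: "(\<lambda>x. \<Phi> (sq_norms lam x)) \<in> gen_alg B" if "smooth \<Phi>" for \<Phi>
    by (rule gen_alg.base) (use that in \<open>auto simp: B_def\<close>)
  have coord: "(\<lambda>x. x $ j) \<in> gen_alg B" for j
    by (rule gen_alg.base) (auto simp: B_def)
  show ?thesis
  proof (rule smooth_gen_alg[where B=B])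
    fix b assume "b \<in> B"
    then consider (radial) \<Phi> where "smooth \<Phi>" "b = (\<lambda>x. \<Phi> (sq_norms lam x))" | (coordinate) j where "b = (\<lambda>x. x $ j)"
      unfolding B_def by blast
    then show "C1_pds_in (gen_alg B) b"
    proof cases
      case radial
      note pd_radial = pd_comp_sq_norms[OF radial(1)]
      have "pd k b \<in> gen_alg B" for k
        unfolding radial(2) pd_radial divide_inverse
        by (intro gen_alg.mult gen_alg.add gen_alg.const coord comp smooth_pd[OF radial(1)])
      moreover have "continuous_on UNIV b"
        unfolding radial(2)
        by (rule continuous_on_compose2[OF smooth_imp_continuous_on[OF radial(1)] continuous_on_sq_norms]) auto
      moreover have "((\<lambda>t. b (x + t *\<^sub>R axis k 1)) has_real_derivative pd k b x) (at 0)" for k x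
        unfolding radial(2) pd_radial by (rule has_pd_comp_sq_norms[OF radial(1)])
      ultimately show ?thesis
        unfolding C1_pds_in_def by blast
    next
      case coordinate
      have pd_b: "pd k b = (\<lambda>x. if j = k then 1 else 0)" for k
        unfolding coordinate by (rule ext, rule pd_eqI, rule has_pd_coord)
      have "((\<lambda>t. b (x + t *\<^sub>R axis k 1)) has_real_derivative pd k b x) (at 0)" for k x
        unfolding pd_b unfolding coordinate by (rule has_pd_coord)
      then show ?thesis
        unfolding C1_pds_in_def pd_b unfolding coordinate
        by (auto intro!: continuous_intros gen_alg.const)
    qed
  qed (rule comp[OF sm])
qed

lemma pd_pd_comp_sq_norms:
  assumes sm: "smooth \<Psi>"
  shows "pd l (pd l (\<lambda>x. \<Psi> (sq_norms lam x))) x =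
    (let y = sq_norms lam x in
      2 * (pd 1 \<Psi> y + pd 2 \<Psi> y / lam l)
      + 4 * (x$l)^2 * (pd 1 (pd 1 \<Psi>) y + (pd 2 (pd 1 \<Psi>) y + pd 1 (pd 2 \<Psi>) y) / lam l
                       + pd 2 (pd 2 \<Psi>) y / (lam l)^2))"
proof -
  note d1 = has_pd_comp_sq_norms[OF smooth_pd[OF sm, of 1], of lam x l]
  note d2 = has_pd_comp_sq_norms[OF smooth_pd[OF sm, of 2], of lam x l]
  have "((\<lambda>t. 2 * (x + t *\<^sub>R axis l 1) $ l * (pd 1 \<Psi> (sq_norms lam (x + t *\<^sub>R axis l 1))
      + pd 2 \<Psi> (sq_norms lam (x + t *\<^sub>R axis l 1)) / lam l)) has_real_derivative
      2 * 1 * (pd 1 \<Psi> (sq_norms lam x) + pd 2 \<Psi> (sq_norms lam x) / lam l)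
      + 2 * x$l * (2 * x$l * (pd 1 (pd 1 \<Psi>) (sq_norms lam x) + pd 2 (pd 1 \<Psi>) (sq_norms lam x) / lam l)
      + 2 * x$l * (pd 1 (pd 2 \<Psi>) (sq_norms lam x) + pd 2 (pd 2 \<Psi>) (sq_norms lam x) / lam l) / lam l)) (at 0)"
    using DERIV_mult[OF DERIV_cmult[OF has_pd_coord[of x l l], of 2] DERIV_add[OF d1 DERIV_cdivide[OF d2, of "lam l"]]]
    by (simp add: algebra_simps)
  from pd_eqI[OF this] show ?thesis
    unfolding pd_comp_sq_norms[OF sm] Let_def
    by (simp add: power2_eq_square algebra_simps add_divide_distrib)
qed

definition Ltil_radial :: "('N::finite \<Rightarrow> real) \<Rightarrow> real \<Rightarrow> ('N \<Rightarrow> real) \<Rightarrow> (real^2 \<Rightarrow> real) \<Rightarrow> real^'N \<Rightarrow> real" where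
  "Ltil_radial lam a del \<Psi> x = (let y = sq_norms lam x in
     \<Sum>l\<in>UNIV. lam l * (a/2 * (1 + del l) *
       (2 * (pd 1 \<Psi> y + pd 2 \<Psi> y / lam l)
        + 4 * (x$l)^2 * (pd 1 (pd 1 \<Psi>) y + (pd 2 (pd 1 \<Psi>) y + pd 1 (pd 2 \<Psi>) y) / lam l
                         + pd 2 (pd 2 \<Psi>) y / (lam l)^2))
       - 2 * (x$l)^2 * (pd 1 \<Psi> y + pd 2 \<Psi> y / lam l)))"

lemma Ltil_comp_sq_norms:
  assumes "smooth \<Psi>"
  shows "Ltil lam a del (\<lambda>x. \<Psi> (sq_norms lam x)) = Ltil_radial lam a del \<Psi>"
  unfolding Ltil_def[abs_def] pd_pd_comp_sq_norms[OF assms]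
  by (intro ext)
    (simp add: Ltil_radial_def pd_comp_sq_norms[OF assms] Let_def power2_eq_square mult_ac)

lemma continuous_on_Ltil:
  assumes "smooth f"
  shows "continuous_on UNIV (Ltil lam a del f)"
  unfolding Ltil_def[abs_def]
  by (intro continuous_intros smooth_imp_continuous_on smooth_pd assms)

lemma continuous_on_Ltil_radial:
  assumes "smooth \<Psi>"
  shows "continuous_on UNIV (Ltil_radial lam a del \<Psi>)"
  unfolding Ltil_comp_sq_norms[OF assms, symmetric]
  by (rule continuous_on_Ltil[OF smooth_comp_sq_norms[OF assms]])

lemma Leps_comp_sq_norms:
  fixes lam :: "('i::finite \<times> bool) \<Rightarrow> real" and b :: "real^('i \<times> bool) \<Rightarrow> real^('i \<times> bool)"
  assumes pair: "\<And>i. lam (i,True) = lam (i,False)"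
    and orth: "\<And>x. inner x (b x) = 0" and orth_w: "\<And>x. winner lam x (b x) = 0"
    and sm: "smooth \<Phi>"
  shows "Leps lam a del b \<kappa> \<epsilon> (\<lambda>x. \<Phi> (sq_norms lam x)) = Ltil lam a del (\<lambda>x. \<Phi> (sq_norms lam x))"
proof
  fix x :: "real^('i \<times> bool)"
  define G where "G = (\<lambda>x. \<Phi> (sq_norms lam x))"
  define P1 where "P1 x = pd 1 \<Phi> (sq_norms lam x)" for x
  define P2 where "P2 x = pd 2 \<Phi> (sq_norms lam x)" for x
  have pdG: "pd l G = (\<lambda>y. 2 * y$l * (P1 y + P2 y / lam l))" for l
    unfolding G_def P1_def P2_def by (rule pd_comp_sq_norms[OF sm])
  have "Bop b G x = 2 * P1 x * inner x (b x) + 2 * P2 x * winner lam x (b x)"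
    unfolding Bop_def pdG inner_vec_def winner_def
    by (simp add: sum.distrib sum_distrib_left algebra_simps)
  then have B0: "Bop b G x = 0"
    using orth orth_w by simp
  have T0: "TJ lam J G = (\<lambda>y. 0)" for J
  proof
    fix y
    obtain k l m where J: "J = (k, l, m)" by (cases J)
    have "TJ lam J G y = 2 * y$k * y$l * y$m *
        ((1/lam k - 1/lam l) * (P1 y + P2 y / lam m)
         + (1/lam l - 1/lam m) * (P1 y + P2 y / lam k)
         + (1/lam m - 1/lam k) * (P1 y + P2 y / lam l))"
      unfolding J TJ_def pdG by (simp add: algebra_simps)
    also have "\<dots> = 0"
      by (simp add: algebra_simps add_divide_distrib diff_divide_distrib)
    finally show "TJ lam J G y = 0" .
  qed
  have R0: "Rop i G = (\<lambda>y. 0)" for i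
    unfolding Rop_def pdG pair by (auto simp: algebra_simps)
  have D0: "Dop lam G x = 0"
    unfolding Dop_def T0 R0 by (simp add: TJ_def Rop_def pd_const split: prod.split)
  show "Leps lam a del b \<kappa> \<epsilon> G x = Ltil lam a del G x"
    using B0 D0 unfolding Leps_def by simp
qed

section \<open>Martingale problem and stationarity\<close>

lemma space_path_space: "space path_space = cpaths"
  unfolding path_space_def by (rule space_measure_of) auto

lemma sets_path_space: "sets path_space = sigma_sets cpaths {(\<lambda>\<omega>. \<omega> t) -` A \<inter> cpaths | t A. 0 \<le> t \<and> A \<in> sets borel}"
  unfolding path_space_def by (rule sets_measure_of) auto

lemma measurable_path_eval:
  assumes "0 \<le> t"
  shows "(\<lambda>\<omega>. \<omega> t) \<in> measurable path_space (borel :: 'a::topological_space measure)"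
proof (rule measurableI)
  fix A :: "'a set" assume "A \<in> sets borel"
  then have "(\<lambda>\<omega>. \<omega> t) -` A \<inter> cpaths \<in> sigma_sets cpaths {(\<lambda>\<omega>. \<omega> t) -` A \<inter> cpaths | t A. 0 \<le> t \<and> A \<in> sets borel}"
    using assms by (intro sigma_sets.Basic) blast
  then show "(\<lambda>\<omega>. \<omega> t) -` A \<inter> space path_space \<in> sets path_space"
    by (simp add: space_path_space sets_path_space)
qed simp

lemma test_fun_continuous_on: "test_fun f \<Longrightarrow> continuous_on UNIV f"
  unfolding test_fun_def smooth_def by (metis pds.simps(1))

lemma test_fun_bounded:
  assumes "test_fun f"
  shows "\<exists>B. \<forall>y. \<bar>f y\<bar> \<le> B"
proof -
  from assms obtain r where r: "\<And>x. r < norm x \<Longrightarrow> f x = 0"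
    unfolding test_fun_def by blast
  have "compact (f ` cball 0 r)"
    by (intro compact_continuous_image continuous_on_subset[OF test_fun_continuous_on[OF assms]]) auto
  then obtain B where B: "\<And>y. y \<in> f ` cball 0 r \<Longrightarrow> norm y \<le> B"
    using compact_imp_bounded bounded_iff by metis
  have "\<bar>f y\<bar> \<le> max B 0" for y
  proof (cases "norm y \<le> r")
    case True then show ?thesis using B[of "f y"] by auto
  next
    case False then show ?thesis using r[of y] by auto
  qed
  then show ?thesis by blast
qed

lemma solves_MP_integral_increment:
  fixes L :: "(real^'N::finite \<Rightarrow> real) \<Rightarrow> real^'N \<Rightarrow> real" and t :: real
  assumes sol: "solves_MP L x P" and tf: "test_fun f" and t: "0 \<le> t"
  shows "integrable P (\<lambda>\<omega>. f (\<omega> t))"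
    "integrable P (\<lambda>\<omega>. integral {0..t} (\<lambda>r. L f (\<omega> r)))"
    "(\<integral>\<omega>. f (\<omega> t) \<partial>P) - f x = (\<integral>\<omega>. integral {0..t} (\<lambda>r. L f (\<omega> r)) \<partial>P)"
proof -
  define X where "X = (\<lambda>(t::real) \<omega>. f (\<omega> t) - f (\<omega> 0) - integral {0..t} (\<lambda>r. L f (\<omega> r)))"
  have ps: "prob_space P" and sP: "sets P = sets path_space" and ae0: "AE \<omega> in P. \<omega> 0 = x"
    and mart: "martingale P nat_filt X"
    using sol tf unfolding solves_MP_def X_def by auto
  interpret prob_space P by (rule ps)
  obtain B where B: "\<And>y. \<bar>f y\<bar> \<le> B" using test_fun_bounded[OF tf] by blast
  have fm: "f \<in> borel_measurable borel"
    by (rule borel_measurable_continuous_onI[OF test_fun_continuous_on[OF tf]])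
  have ev: "(\<lambda>\<omega>. \<omega> s) \<in> measurable P borel" if "0 \<le> s" for s
    using measurable_path_eval[OF that] measurable_cong_sets[OF sP refl] by blast
  have intf: "integrable P (\<lambda>\<omega>. f (\<omega> s))" if "0 \<le> s" for s
    by (rule integrable_const_bound[where B=B]) (use B measurable_compose[OF ev[OF that] fm] in auto)
  show i1: "integrable P (\<lambda>\<omega>. f (\<omega> t))" by (rule intf[OF t])
  have intX: "integrable P (X t)" and sf0: "sigma_finite_subalgebra P (nat_filt 0)"
    and ce: "AE \<omega> in P. real_cond_exp P (nat_filt 0) (X t) \<omega> = X 0 \<omega>"
    using mart t unfolding martingale_def by auto
  have X0: "X 0 \<omega> = 0" for \<omega> by (simp add: X_def)
  have "(\<integral>\<omega>. X t \<omega> \<partial>P) = (\<integral>\<omega>. real_cond_exp P (nat_filt 0) (X t) \<omega> \<partial>P)"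
    using sigma_finite_subalgebra.real_cond_exp_int(2)[OF sf0 intX] by simp
  also have "\<dots> = 0"
    by (rule integral_eq_zero_AE) (use ce X0 in auto)
  finally have EX: "(\<integral>\<omega>. X t \<omega> \<partial>P) = 0" .
  have Ieq: "(\<lambda>\<omega>. integral {0..t} (\<lambda>r. L f (\<omega> r))) = (\<lambda>\<omega>. f (\<omega> t) - f (\<omega> 0) - X t \<omega>)"
    by (auto simp: X_def)
  show i2: "integrable P (\<lambda>\<omega>. integral {0..t} (\<lambda>r. L f (\<omega> r)))"
    unfolding Ieq using i1 intf[of 0] intX by (intro Bochner_Integration.integrable_diff) auto
  have f0: "(\<integral>\<omega>. f (\<omega> 0) \<partial>P) = f x"
  proof -
    have "(\<integral>\<omega>. f (\<omega> 0) \<partial>P) = (\<integral>\<omega>. f x \<partial>P)"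
      by (rule integral_cong_AE) (use ae0 measurable_compose[OF ev fm] in auto)
    then show ?thesis by (simp add: prob_space)
  qed
  show "(\<integral>\<omega>. f (\<omega> t) \<partial>P) - f x = (\<integral>\<omega>. integral {0..t} (\<lambda>r. L f (\<omega> r)) \<partial>P)"
    unfolding Ieq using i1 intf[of 0] intX EX f0 by simp
qed

lemma path_average_tendsto:
  fixes g :: "'a::topological_space \<Rightarrow> real"
  assumes w: "\<omega> \<in> cpaths" and gc: "continuous_on UNIV g"
  shows "((\<lambda>n. integral {0..1 / real (Suc n)} (\<lambda>r. g (\<omega> r)) / (1 / real (Suc n))) \<longlongrightarrow> g (\<omega> 0)) sequentially"
proof -
  have wc: "continuous_on {0..} \<omega>" using w unfolding cpaths_def by auto
  have hc: "continuous_on {0..1} (\<lambda>r. g (\<omega> r))"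
    by (rule continuous_on_compose2[OF gc continuous_on_subset[OF wc]]) auto
  have "((\<lambda>u. integral {0..u} (\<lambda>r. g (\<omega> r))) has_vector_derivative g (\<omega> 0)) (at 0 within {0..1})"
    using integral_has_vector_derivative[OF hc, of 0] by simp
  then have "((\<lambda>u. integral {0..u} (\<lambda>r. g (\<omega> r))) has_real_derivative g (\<omega> 0)) (at 0 within {0..1})"
    by (simp add: has_real_derivative_iff_has_vector_derivative)
  then have l: "((\<lambda>y. (integral {0..y} (\<lambda>r. g (\<omega> r)) - integral {0..0} (\<lambda>r. g (\<omega> r))) / (y - 0)) \<longlongrightarrow> g (\<omega> 0)) (at 0 within {0..1})"
    by (simp add: has_field_derivative_iff)
  have tn: "filterlim (\<lambda>n. 1 / real (Suc n)) (at 0 within {0..1}) sequentially"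
    unfolding filterlim_at
  proof
    show "\<forall>\<^sub>F n in sequentially. 1 / real (Suc n) \<in> {0..1} \<and> 1 / real (Suc n) \<noteq> 0"
      by (auto simp: field_simps)
    show "((\<lambda>n. 1 / real (Suc n)) \<longlongrightarrow> 0) sequentially"
      using LIMSEQ_inverse_real_of_nat by (simp add: inverse_eq_divide)
  qed
  show ?thesis using filterlim_compose[OF l tn] by simp
qed

lemma abs_integral_path_le:
  fixes g :: "'a::topological_space \<Rightarrow> real"
  assumes w: "\<omega> \<in> cpaths" and gc: "continuous_on UNIV g" and M: "\<And>y. \<bar>g y\<bar> \<le> M" and t: "0 \<le> t"
  shows "\<bar>integral {0..t} (\<lambda>r. g (\<omega> r))\<bar> \<le> M * t"
proof -
  have wc: "continuous_on {0..} \<omega>" using w unfolding cpaths_def by auto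
  have hc: "continuous_on {0..t} (\<lambda>r. g (\<omega> r))"
    by (rule continuous_on_compose2[OF gc continuous_on_subset[OF wc]]) auto
  show ?thesis using integral_bound[OF t hc, of M] M by simp
qed

lemma space_solves_MP: "solves_MP L x P \<Longrightarrow> space P = cpaths"
  unfolding solves_MP_def using sets_eq_imp_space_eq space_path_space by metis

lemma solves_MP_difference_quotient_tendsto:
  fixes L :: "(real^'N::finite \<Rightarrow> real) \<Rightarrow> real^'N \<Rightarrow> real"
  assumes sol: "solves_MP L x P" and tf: "test_fun f" and Lc: "continuous_on UNIV (L f)"
    and M: "\<And>y. \<bar>L f y\<bar> \<le> M"
  shows "((\<lambda>n. ((\<integral>\<omega>. f (\<omega> (1 / real (Suc n))) \<partial>P) - f x) / (1 / real (Suc n))) \<longlongrightarrow> L f x) sequentially"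
proof -
  define tn where "tn n = 1 / real (Suc n)" for n
  have tn0: "0 \<le> tn n" "0 < tn n" for n by (auto simp: tn_def)
  have ps: "prob_space P" and sP: "sets P = sets path_space" and ae0: "AE \<omega> in P. \<omega> 0 = x"
    using sol unfolding solves_MP_def by auto
  interpret prob_space P by (rule ps)
  have spP: "space P = cpaths" by (rule space_solves_MP[OF sol])
  note st = solves_MP_integral_increment[OF sol tf tn0(1)]
  have ev0: "(\<lambda>\<omega>. \<omega> 0) \<in> measurable P borel"
    using measurable_path_eval[of 0] measurable_cong_sets[OF sP refl] by auto
  have Lm: "L f \<in> borel_measurable borel" by (rule borel_measurable_continuous_onI[OF Lc])
  have "(\<lambda>n. \<integral>\<omega>. integral {0..tn n} (\<lambda>r. L f (\<omega> r)) / tn n \<partial>P) \<longlonglongrightarrow> (\<integral>\<omega>. L f (\<omega> 0) \<partial>P)"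
  proof (rule integral_dominated_convergence[where w="\<lambda>_. M"])
    show "(\<lambda>\<omega>. L f (\<omega> 0)) \<in> borel_measurable P" using measurable_compose[OF ev0 Lm] .
    show "(\<lambda>\<omega>. integral {0..tn n} (\<lambda>r. L f (\<omega> r)) / tn n) \<in> borel_measurable P" for n
      using borel_measurable_integrable[OF st(2)[of n]] by measurable
    show "integrable P (\<lambda>_. M)" by simp
    show "AE \<omega> in P. (\<lambda>n. integral {0..tn n} (\<lambda>r. L f (\<omega> r)) / tn n) \<longlonglongrightarrow> L f (\<omega> 0)"
      using path_average_tendsto[OF _ Lc] spP unfolding tn_def by (intro AE_I2) auto
    show "AE \<omega> in P. norm (integral {0..tn n} (\<lambda>r. L f (\<omega> r)) / tn n) \<le> M" for n
    proof (intro AE_I2)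
      fix \<omega> assume "\<omega> \<in> space P"
      then have "\<bar>integral {0..tn n} (\<lambda>r. L f (\<omega> r))\<bar> \<le> M * tn n"
        using abs_integral_path_le[OF _ Lc M tn0(1)] spP by auto
      then show "norm (integral {0..tn n} (\<lambda>r. L f (\<omega> r)) / tn n) \<le> M"
        using tn0(2)[of n] by (simp add: divide_le_eq abs_div)
    qed
  qed
  moreover have "(\<integral>\<omega>. L f (\<omega> 0) \<partial>P) = L f x"
  proof -
    have "(\<integral>\<omega>. L f (\<omega> 0) \<partial>P) = (\<integral>\<omega>. L f x \<partial>P)"
      by (rule integral_cong_AE) (use ae0 measurable_compose[OF ev0 Lm] in auto)
    then show ?thesis by (simp add: prob_space)
  qed
  moreover have "(\<integral>\<omega>. integral {0..tn n} (\<lambda>r. L f (\<omega> r)) / tn n \<partial>P) = ((\<integral>\<omega>. f (\<omega> (tn n)) \<partial>P) - f x) / tn n" for n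
    using st(3)[of n] by simp
  ultimately show ?thesis unfolding tn_def by simp
qed

lemma abs_solves_MP_difference_quotient_le:
  fixes L :: "(real^'N::finite \<Rightarrow> real) \<Rightarrow> real^'N \<Rightarrow> real"
  assumes sol: "solves_MP L x P" and tf: "test_fun f" and Lc: "continuous_on UNIV (L f)"
    and M: "\<And>y. \<bar>L f y\<bar> \<le> M" and t: "0 < t"
  shows "\<bar>((\<integral>\<omega>. f (\<omega> t) \<partial>P) - f x) / t\<bar> \<le> M"
proof -
  have ps: "prob_space P" using sol unfolding solves_MP_def by auto
  interpret prob_space P by (rule ps)
  have spP: "space P = cpaths" by (rule space_solves_MP[OF sol])
  note st = solves_MP_integral_increment[OF sol tf less_imp_le[OF t]]
  have "\<bar>\<integral>\<omega>. integral {0..t} (\<lambda>r. L f (\<omega> r)) \<partial>P\<bar> \<le> (\<integral>\<omega>. \<bar>integral {0..t} (\<lambda>r. L f (\<omega> r))\<bar> \<partial>P)"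
    using integral_norm_bound[of P "\<lambda>\<omega>. integral {0..t} (\<lambda>r. L f (\<omega> r))"] by simp
  also have "\<dots> \<le> (\<integral>\<omega>. M * t \<partial>P)"
    by (rule integral_mono) (use st(2) abs_integral_path_le[OF _ Lc M less_imp_le[OF t]] spP in auto)
  also have "\<dots> = M * t" by (simp add: prob_space)
  finally show ?thesis using st(3) t by (simp add: abs_div divide_le_eq)
qed

lemma bind_stationary_kernel:
  fixes P :: "real^'N::finite \<Rightarrow> (real \<Rightarrow> real^'N) measure"
  assumes sm: "sets \<mu> = sets borel"
    and sol: "\<And>x. solves_MP L x (P x)"
    and kern: "\<And>A. A \<in> sets borel \<Longrightarrow>
           (\<lambda>x. emeasure (P x) {\<omega>\<in>space (P x). \<omega> t \<in> A}) \<in> borel_measurable borel \<and>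
           (\<integral>\<^sup>+x. emeasure (P x) {\<omega>\<in>space (P x). \<omega> t \<in> A} \<partial>\<mu>) = emeasure \<mu> A"
    and t: "0 \<le> t"
  defines "K x \<equiv> distr (P x) borel (\<lambda>\<omega>. \<omega> t)"
  shows "K \<in> measurable \<mu> (subprob_algebra borel)" "bind \<mu> K = \<mu>"
proof -
  have psP: "prob_space (P x)" and sP: "sets (P x) = sets path_space" for x
    using sol[of x] unfolding solves_MP_def by auto
  have ev: "(\<lambda>\<omega>. \<omega> t) \<in> measurable (P x) borel" for x
    using measurable_path_eval[OF t] measurable_cong_sets[OF sP refl] by blast
  have sK: "sets (K x) = sets borel" for x by (simp add: K_def)
  have emK: "emeasure (K x) A = emeasure (P x) {\<omega>\<in>space (P x). \<omega> t \<in> A}" if "A \<in> sets borel" for x A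
    unfolding K_def emeasure_distr[OF ev that] by (metis Int_commute Collect_conj_eq Collect_mem_eq vimage_def)
  show Km: "K \<in> measurable \<mu> (subprob_algebra borel)"
  proof (rule measurable_subprob_algebra)
    show "subprob_space (K x)" for x
      unfolding K_def by (intro prob_space_imp_subprob_space prob_space.prob_space_distr[OF psP ev])
    show "sets (K x) = sets borel" for x by (rule sK)
    show "(\<lambda>x. emeasure (K x) A) \<in> borel_measurable \<mu>" if A: "A \<in> sets borel" for A
      using kern[OF A] emK[OF A] unfolding measurable_cong_sets[OF sm refl] by simp
  qed
  have ne: "space \<mu> \<noteq> {}" using sets_eq_imp_space_eq[OF sm] by simp
  have sB: "sets (bind \<mu> K) = sets borel"
    by (rule sets_bind[OF _ ne]) (rule sK)
  show "bind \<mu> K = \<mu>"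
  proof (rule measure_eqI)
    show "sets (bind \<mu> K) = sets \<mu>" using sB sm by simp
    fix A assume "A \<in> sets (bind \<mu> K)"
    then have A: "A \<in> sets borel" using sB by simp
    have "emeasure (bind \<mu> K) A = (\<integral>\<^sup>+x. emeasure (P x) {\<omega>\<in>space (P x). \<omega> t \<in> A} \<partial>\<mu>)"
      using emeasure_bind[OF ne Km A] emK[OF A] by simp
    also have "\<dots> = emeasure \<mu> A" using kern[OF A] by simp
    finally show "emeasure (bind \<mu> K) A = emeasure \<mu> A" .
  qed
qed

lemma integral_stationary_kernel:
  fixes P :: "real^'N::finite \<Rightarrow> (real \<Rightarrow> real^'N) measure" and f :: "real^'N \<Rightarrow> real"
  assumes ps: "prob_space \<mu>" and sm: "sets \<mu> = sets borel"
    and sol: "\<And>x. solves_MP L x (P x)"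
    and kern: "\<And>A. A \<in> sets borel \<Longrightarrow>
           (\<lambda>x. emeasure (P x) {\<omega>\<in>space (P x). \<omega> t \<in> A}) \<in> borel_measurable borel \<and>
           (\<integral>\<^sup>+x. emeasure (P x) {\<omega>\<in>space (P x). \<omega> t \<in> A} \<partial>\<mu>) = emeasure \<mu> A"
    and t: "0 \<le> t"
    and fm: "f \<in> borel_measurable borel" and B: "\<And>y. \<bar>f y\<bar> \<le> B"
  shows "integrable \<mu> (\<lambda>x. \<integral>\<omega>. f (\<omega> t) \<partial>P x)"
    "(\<integral>x. (\<integral>\<omega>. f (\<omega> t) \<partial>P x) \<partial>\<mu>) = (\<integral>x. f x \<partial>\<mu>)"
proof -
  interpret mu: prob_space \<mu> by (rule ps)
  define K where "K x = distr (P x) borel (\<lambda>\<omega>. \<omega> t)" for x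
  have Km: "K \<in> measurable \<mu> (subprob_algebra borel)"
    unfolding K_def[abs_def] by (rule bind_stationary_kernel(1)[OF sm sol kern t])
  have bind: "bind \<mu> K = \<mu>"
    unfolding K_def[abs_def] by (rule bind_stationary_kernel(2)[OF sm sol kern t])
  have psP: "prob_space (P x)" and sP: "sets (P x) = sets path_space" for x
    using sol[of x] unfolding solves_MP_def by auto
  have ev: "(\<lambda>\<omega>. \<omega> t) \<in> measurable (P x) borel" for x
    using measurable_path_eval[OF t] measurable_cong_sets[OF sP refl] by blast
  have psK: "prob_space (K x)" for x
    unfolding K_def by (rule prob_space.prob_space_distr[OF psP ev])
  have intK: "integral\<^sup>L (K x) f = (\<integral>\<omega>. f (\<omega> t) \<partial>P x)" for x
    unfolding K_def by (rule integral_distr[OF ev fm])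
  have "\<bar>integral\<^sup>L (K x) f\<bar> \<le> B" for x
  proof -
    interpret Kx: prob_space "K x" by (rule psK)
    have "integrable (K x) f"
      by (rule Kx.integrable_const_bound[where B=B]) (use B fm in \<open>auto simp: K_def\<close>)
    then have "(\<integral>y. \<bar>f y\<bar> \<partial>K x) \<le> B"
      using B by (intro Kx.integral_le_const) auto
    then show ?thesis
      using integral_norm_bound[of "K x" f] unfolding real_norm_def by linarith
  qed
  then have "integrable \<mu> (\<lambda>x. integral\<^sup>L (K x) f)"
    using measurable_compose[OF Km integral_measurable_subprob_algebra[OF fm]]
    by (intro mu.integrable_const_bound[where B=B]) auto
  then show "integrable \<mu> (\<lambda>x. \<integral>\<omega>. f (\<omega> t) \<partial>P x)"
    unfolding intK .
  have "integral\<^sup>L (bind \<mu> K) f = (\<integral>x. integral\<^sup>L (K x) f \<partial>\<mu>)"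
  proof (rule integral_bind[OF fm _ Km, where B=B and B'=1])
    show "\<And>x. x \<in> space borel \<Longrightarrow> \<bar>f x\<bar> \<le> B" using B by auto
    show "finite_measure \<mu>" by (rule mu.finite_measure_axioms)
    show "AE x in \<mu>. emeasure (K x) (space (K x)) \<le> ennreal 1"
      using prob_space.emeasure_space_1[OF psK] by simp
  qed
  then show "(\<integral>x. (\<integral>\<omega>. f (\<omega> t) \<partial>P x) \<partial>\<mu>) = (\<integral>x. f x \<partial>\<mu>)"
    unfolding bind intK by simp
qed

lemma stationary_probE:
  assumes "stationary_prob L \<mu>"
  obtains P where "\<And>x. solves_MP L x (P x)"
    and "\<And>t A. 0 \<le> t \<Longrightarrow> A \<in> sets borel \<Longrightarrow>
      (\<lambda>x. emeasure (P x) {\<omega>\<in>space (P x). \<omega> t \<in> A}) \<in> borel_measurable borel \<and>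
      (\<integral>\<^sup>+x. emeasure (P x) {\<omega>\<in>space (P x). \<omega> t \<in> A} \<partial>\<mu>) = emeasure \<mu> A"
  using assms unfolding stationary_prob_def by blast

lemma stationary_integral_generator_eq_0:
  fixes L :: "(real^'N::finite \<Rightarrow> real) \<Rightarrow> real^'N \<Rightarrow> real"
  assumes stat: "stationary_prob L \<mu>" and tf: "test_fun f" and Lc: "continuous_on UNIV (L f)"
    and M: "\<And>y. \<bar>L f y\<bar> \<le> M"
  shows "(\<integral>x. L f x \<partial>\<mu>) = 0"
proof -
  have ps: "prob_space \<mu>" and sm: "sets \<mu> = sets borel"
    using stat unfolding stationary_prob_def by auto
  interpret mu: prob_space \<mu> by (rule ps)
  obtain P where sol: "\<And>x. solves_MP L x (P x)" and kern: "\<And>t A. 0 \<le> t \<Longrightarrow> A \<in> sets borel \<Longrightarrow>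
      (\<lambda>x. emeasure (P x) {\<omega>\<in>space (P x). \<omega> t \<in> A}) \<in> borel_measurable borel \<and>
      (\<integral>\<^sup>+x. emeasure (P x) {\<omega>\<in>space (P x). \<omega> t \<in> A} \<partial>\<mu>) = emeasure \<mu> A"
    using stationary_probE[OF stat] by blast
  obtain B where B: "\<And>y. \<bar>f y\<bar> \<le> B" using test_fun_bounded[OF tf] by blast
  have fm: "f \<in> borel_measurable borel"
    by (rule borel_measurable_continuous_onI[OF test_fun_continuous_on[OF tf]])
  have fmu: "f \<in> borel_measurable \<mu>"
    using fm measurable_cong_sets[OF sm refl] by blast
  have fint: "integrable \<mu> f"
    by (rule mu.integrable_const_bound[where B=B]) (use B fmu in auto)
  define tn where "tn n = 1 / real (Suc n)" for n
  have tn: "0 < tn n" for n by (simp add: tn_def)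
  note invariant = integral_stationary_kernel[OF ps sm sol kern[OF less_imp_le[OF tn]] less_imp_le[OF tn] fm B]
  define W where "W n x = ((\<integral>\<omega>. f (\<omega> (tn n)) \<partial>P x) - f x) / tn n" for n x
  have "(\<lambda>n. \<integral>x. W n x \<partial>\<mu>) \<longlonglongrightarrow> (\<integral>x. L f x \<partial>\<mu>)"
  proof (rule integral_dominated_convergence[where w="\<lambda>_. M"])
    show "L f \<in> borel_measurable \<mu>"
      using borel_measurable_continuous_onI[OF Lc] sm by simp
    show "W n \<in> borel_measurable \<mu>" for n
      unfolding W_def
      by (intro borel_measurable_divide borel_measurable_diff borel_measurable_integrable[OF invariant(1)] fmu
          borel_measurable_const)
    show "integrable \<mu> (\<lambda>_. M)" by simp
    show "AE x in \<mu>. (\<lambda>n. W n x) \<longlonglongrightarrow> L f x"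
      using solves_MP_difference_quotient_tendsto[OF sol tf Lc M] unfolding W_def tn_def by simp
    show "AE x in \<mu>. norm (W n x) \<le> M" for n
      using abs_solves_MP_difference_quotient_le[OF sol tf Lc M tn] unfolding W_def by simp
  qed
  moreover have "(\<integral>x. W n x \<partial>\<mu>) = 0" for n
    using invariant[of n] fint unfolding W_def by simp
  ultimately show ?thesis
    by (simp add: LIMSEQ_const_iff)
qed

section \<open>Truncation\<close>

definition cutoff :: "real \<Rightarrow> real^2 \<Rightarrow> real" where
  "cutoff R y = expinv 0 (R - y$1)"

lemma has_pd_expinv_shift:
  "((\<lambda>t. C * expinv j (R - (y + t *\<^sub>R axis k 1) $ 1)) has_real_derivative
     (if k = 1 then - C * expinv (Suc j) (R - y$1) else 0)) (at 0)"
proof (cases "k = 1")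
  case True
  have "((\<lambda>t. R - y$1 - t) has_real_derivative -1) (at 0)"
    by (auto intro!: derivative_eq_intros)
  from DERIV_cmult[OF DERIV_chain2[OF has_real_derivative_expinv this], of C] True show ?thesis
    by (simp add: axis_def algebra_simps)
next
  case False
  then show ?thesis by (simp add: axis_def)
qed

lemma pd_expinv_shift:
  "pd k (\<lambda>y::real^2. C * expinv j (R - y$1)) =
     (\<lambda>y. if k = 1 then - C * expinv (Suc j) (R - y$1) else 0)"
  by (rule ext, rule pd_eqI, rule has_pd_expinv_shift)

lemma pds_cutoff:
  "pds ks (cutoff R) =
     (\<lambda>y. if set ks \<subseteq> {1} then (-1) ^ length ks * expinv (length ks) (R - y$1) else 0)"
proof (induction ks)
  case Nil
  then show ?case by (simp add: cutoff_def[abs_def])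
next
  case (Cons k ks)
  show ?case
  proof (cases "set ks \<subseteq> {1}")
    case True
    with Cons.IH pd_expinv_shift[of k "(-1) ^ length ks" "length ks" R] show ?thesis by auto
  next
    case False
    with Cons.IH pd_const show ?thesis by auto
  qed
qed

lemma smooth_cutoff: "smooth (cutoff R)"
proof (rule smooth_gen_alg)
  let ?B = "range (\<lambda>j (y::real^2). expinv j (R - y$1))"
  show "C1_pds_in (gen_alg ?B) b" if "b \<in> ?B" for b
  proof -
    from that obtain j where b: "b = (\<lambda>y. expinv j (R - y$1))" by blast
    note pd_b = pd_expinv_shift[of _ 1 j R, simplified]
    have "(\<lambda>y. -1 * expinv (Suc j) (R - y$1)) \<in> gen_alg ?B"
      by (intro gen_alg.mult gen_alg.const gen_alg.base) auto
    then have "pd k b \<in> gen_alg ?B" for k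
      unfolding b pd_b by (cases "k = 1") (auto intro: gen_alg.const)
    moreover have "continuous_on UNIV b"
      unfolding b by (intro continuous_intros continuous_on_compose2[OF continuous_on_expinv]) auto
    moreover have "((\<lambda>t. b (y + t *\<^sub>R axis k 1)) has_real_derivative pd k b y) (at 0)" for k y
      using has_pd_expinv_shift[of 1 j R y k] unfolding b pd_b by simp
    ultimately show ?thesis
      unfolding C1_pds_in_def by blast
  qed
  show "cutoff R \<in> gen_alg ?B"
    by (rule gen_alg.base) (auto simp: cutoff_def[abs_def])
qed

lemma abs_pds_cutoff_le:
  assumes "\<And>t. \<bar>expinv (length ks) t\<bar> \<le> M"
  shows "\<bar>pds ks (cutoff R) y\<bar> \<le> M"
proof -
  have "0 \<le> M" using assms[of 0] by linarith
  then show ?thesis using assms by (simp add: pds_cutoff abs_mult power_abs)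
qed

lemma pds_cutoff_eq_0: "R \<le> y$1 \<Longrightarrow> pds ks (cutoff R) y = 0"
  by (simp add: pds_cutoff expinv_nonpos)

lemma pds_cutoff_tendsto:
  "((\<lambda>n. pds ks (cutoff (real n)) y) \<longlongrightarrow> (if ks = [] then 1 else 0)) sequentially"
proof -
  have "filterlim (\<lambda>n. - y$1 + real n) at_top sequentially"
    by (rule filterlim_tendsto_add_at_top[OF tendsto_const filterlim_real_sequentially])
  from filterlim_compose[OF expinv_tendsto_at_top this, of "length ks"]
  have "((\<lambda>n. expinv (length ks) (real n - y$1)) \<longlongrightarrow> (if ks = [] then 1 else 0)) sequentially"
    by (cases ks) simp_all
  then show ?thesis
    unfolding pds_cutoff by (cases "set ks \<subseteq> {1}") (auto intro: tendsto_mult_right_zero)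
qed

definition truncation :: "(real^2 \<Rightarrow> real) \<Rightarrow> real \<Rightarrow> real^2 \<Rightarrow> real" where
  "truncation \<psi> R y = \<psi> y * cutoff R y"

lemma smooth_truncation: "smooth \<psi> \<Longrightarrow> smooth (truncation \<psi> R)"
  unfolding truncation_def[abs_def] by (intro smooth_mult smooth_cutoff)

lemma length_le_2_cases:
  assumes "length ks \<le> 2"
  obtains "ks = []" | i where "ks = [i]" | i j where "ks = [j, i]"
  using assms by (cases ks rule: remdups_adj.cases) auto

lemma pds_truncation_tendsto:
  assumes "smooth \<psi>" "length ks \<le> 2"
  shows "((\<lambda>n. pds ks (truncation \<psi> (real n)) y) \<longlongrightarrow> pds ks \<psi> y) sequentially"
proof -
  note lim = pds_cutoff_tendsto[of "[]" y] pds_cutoff_tendsto[of "[_]" y] pds_cutoff_tendsto[of "[_, _]" y]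
  from assms(2) show ?thesis
  proof (cases rule: length_le_2_cases)
    case 1
    then show ?thesis using lim(1) by (auto simp: truncation_def intro!: tendsto_eq_intros)
  next
    case (2 i)
    then show ?thesis using lim(1,2)
      by (auto simp: truncation_def[abs_def] pd_mult[OF assms(1) smooth_cutoff] intro!: tendsto_eq_intros)
  next
    case (3 i j)
    then show ?thesis using lim
      by (auto simp: truncation_def[abs_def] pd_pd_mult[OF assms(1) smooth_cutoff] intro!: tendsto_eq_intros)
  qed
qed

lemma abs_pds_truncation_le:
  assumes sm: "smooth \<psi>" and ks: "length ks \<le> 2"
    and P: "\<And>ms. length ms \<le> 2 \<Longrightarrow> \<bar>pds ms \<psi> y\<bar> \<le> P"
    and M: "\<And>j t. j \<le> 2 \<Longrightarrow> \<bar>expinv j t\<bar> \<le> M"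
  shows "\<bar>pds ks (truncation \<psi> R) y\<bar> \<le> 4 * P * M"
proof -
  have t: "\<bar>pds ms \<psi> y * pds ns (cutoff R) y\<bar> \<le> P * M" if "length ms \<le> 2" "length ns \<le> 2" for ms ns
    unfolding abs_mult
    by (intro mult_mono P abs_pds_cutoff_le M that) (use P[OF that(1)] in auto)
  have P0: "0 \<le> P" "0 \<le> M" using P[of "[]"] M[of 0 0] by auto
  from ks show ?thesis
  proof (cases rule: length_le_2_cases)
    case 1
    then show ?thesis using t[of "[]" "[]"] P0 by (simp add: truncation_def[abs_def])
  next
    case (2 i)
    then show ?thesis using t[of "[i]" "[]"] t[of "[]" "[i]"] P0
      by (simp add: truncation_def[abs_def] pd_mult[OF sm smooth_cutoff])
  next
    case (3 i j)
    then show ?thesis using t[of "[j, i]" "[]"] t[of "[i]" "[j]"] t[of "[j]" "[i]"] t[of "[]" "[j, i]"]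
      by (simp add: truncation_def[abs_def] pd_pd_mult[OF sm smooth_cutoff])
  qed
qed

lemma pds_truncation_eq_0:
  assumes sm: "smooth \<psi>" and ks: "length ks \<le> 2" and y: "R \<le> y$1"
  shows "pds ks (truncation \<psi> R) y = 0"
  using ks
proof (cases rule: length_le_2_cases)
  case 1
  then show ?thesis using pds_cutoff_eq_0[OF y, of "[]"] by (simp add: truncation_def)
next
  case (2 i)
  then show ?thesis using pds_cutoff_eq_0[OF y, of "[]"] pds_cutoff_eq_0[OF y, of "[i]"]
    by (simp add: truncation_def[abs_def] pd_mult[OF sm smooth_cutoff])
next
  case (3 i j)
  then show ?thesis
    using pds_cutoff_eq_0[OF y, of "[]"] pds_cutoff_eq_0[OF y, of "[i]"] pds_cutoff_eq_0[OF y, of "[j]"]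
      pds_cutoff_eq_0[OF y, of "[j, i]"]
    by (simp add: truncation_def[abs_def] pd_pd_mult[OF sm smooth_cutoff])
qed

section \<open>Growth bounds\<close>

lemma abs_divide_le_of_ge_1: "1 \<le> (c::real) \<Longrightarrow> \<bar>q / c\<bar> \<le> \<bar>q\<bar>"
  by (simp add: abs_div divide_le_eq mult_le_cancel_left1)

lemma abs_Ltil_radial_term_le:
  fixes lam e a A B x W :: real
  assumes lam: "1 \<le> lam" and e: "0 \<le> e" "e \<le> 1" and a: "0 < a"
    and A: "\<bar>A\<bar> \<le> 2 * W" and B: "\<bar>B\<bar> \<le> 4 * W"
  shows "\<bar>lam * (a/2 * e * (2 * A + 4 * x^2 * B) - 2 * x^2 * A)\<bar> \<le> lam * (2*a + (8*a+4) * x^2) * W"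
proof -
  have W: "0 \<le> W" using A by linarith
  have "\<bar>4 * x^2 * B\<bar> \<le> 16 * x^2 * W"
    using mult_left_mono[OF B, of "4 * x^2"] by (simp add: abs_mult)
  then have "\<bar>2 * A + 4 * x^2 * B\<bar> \<le> 4 * W + 16 * x^2 * W"
    using A abs_triangle_ineq[of "2 * A" "4 * x^2 * B"] by linarith
  then have "\<bar>a/2 * e * (2 * A + 4 * x^2 * B)\<bar> \<le> a/2 * 1 * (4 * W + 16 * x^2 * W)"
    unfolding abs_mult using a e W by (intro mult_mono) auto
  moreover have "\<bar>2 * x^2 * A\<bar> \<le> 4 * x^2 * W"
    using mult_left_mono[OF A, of "2 * x^2"] by (simp add: abs_mult)
  ultimately have "\<bar>a/2 * e * (2 * A + 4 * x^2 * B) - 2 * x^2 * A\<bar> \<le> (2*a + (8*a+4) * x^2) * W"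
    using abs_triangle_ineq4[of "a/2 * e * (2 * A + 4 * x^2 * B)" "2 * x^2 * A"]
    by (simp add: algebra_simps)
  then show ?thesis
    using lam by (simp add: abs_mult mult.assoc mult_left_mono)
qed

lemma abs_Ltil_radial_le:
  fixes lam :: "'N::finite \<Rightarrow> real"
  assumes lam: "\<And>l. 1 \<le> lam l" and del: "\<And>l. 0 \<le> 1 + del l" "\<And>l. 1 + del l \<le> 1" and a: "0 < a"
    and W: "\<And>ks. length ks \<le> 2 \<Longrightarrow> \<bar>pds ks \<Psi> (sq_norms lam x)\<bar> \<le> W"
  shows "\<bar>Ltil_radial lam a del \<Psi> x\<bar> \<le> (\<Sum>l\<in>UNIV. lam l) * (2*a + (8*a+4) * (norm x)^2) * W"
proof -
  let ?y = "sq_norms lam x"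
  have W0: "0 \<le> W" using W[of "[]"] by simp
  have "\<bar>Ltil_radial lam a del \<Psi> x\<bar> \<le> (\<Sum>l\<in>UNIV. lam l * (2*a + (8*a+4) * (x$l)^2) * W)"
    unfolding Ltil_radial_def Let_def
  proof (rule order_trans[OF sum_abs sum_mono], rule abs_Ltil_radial_term_le)
    fix l
    have W1: "\<bar>pd i \<Psi> ?y\<bar> \<le> W" for i
      using W[of "[i]"] by simp
    have W2: "\<bar>pd i (pd j \<Psi>) ?y\<bar> \<le> W" for i j
      using W[of "[i, j]"] by simp
    have l1: "\<bar>q / lam l\<bar> \<le> \<bar>q\<bar>" and l2: "\<bar>q / (lam l)^2\<bar> \<le> \<bar>q\<bar>" for q
      using abs_divide_le_of_ge_1 lam[of l] by (auto simp: one_le_power)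
    show "\<bar>pd 1 \<Psi> ?y + pd 2 \<Psi> ?y / lam l\<bar> \<le> 2 * W"
      using W1[of 1] W1[of 2] l1[of "pd 2 \<Psi> ?y"] abs_triangle_ineq[of "pd 1 \<Psi> ?y" "pd 2 \<Psi> ?y / lam l"]
      by linarith
    let ?q = "pd 2 (pd 1 \<Psi>) ?y + pd 1 (pd 2 \<Psi>) ?y"
    show "\<bar>pd 1 (pd 1 \<Psi>) ?y + ?q / lam l + pd 2 (pd 2 \<Psi>) ?y / (lam l)^2\<bar> \<le> 4 * W"
      using W2[of 1 1] W2[of 2 1] W2[of 1 2] W2[of 2 2] l1[of ?q] l2[of "pd 2 (pd 2 \<Psi>) ?y"]
        abs_triangle_ineq[of "pd 2 (pd 1 \<Psi>) ?y" "pd 1 (pd 2 \<Psi>) ?y"]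
        abs_triangle_ineq[of "pd 1 (pd 1 \<Psi>) ?y + ?q / lam l" "pd 2 (pd 2 \<Psi>) ?y / (lam l)^2"]
        abs_triangle_ineq[of "pd 1 (pd 1 \<Psi>) ?y" "?q / lam l"]
      by linarith
  qed (use lam del a in auto)
  also have "\<dots> \<le> (\<Sum>l\<in>UNIV. lam l * (2*a + (8*a+4) * (norm x)^2) * W)"
  proof (rule sum_mono)
    fix l
    have "(x$l)^2 \<le> (norm x)^2"
      using component_le_norm_cart[of x l] by (metis abs_ge_zero power2_abs power_mono)
    then show "lam l * (2*a + (8*a+4) * (x$l)^2) * W \<le> lam l * (2*a + (8*a+4) * (norm x)^2) * W"
      using lam[of l] a W0 by (intro mult_right_mono mult_left_mono) auto
  qed
  finally show ?thesis
    by (simp add: sum_distrib_right)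
qed

lemma poly_growth_uniform:
  fixes F :: "'k \<Rightarrow> 'a::real_normed_vector \<Rightarrow> real"
  assumes "finite K" and growth: "\<And>k. \<exists>C (m::nat). \<forall>y. \<bar>F k y\<bar> \<le> C * (1 + norm y) ^ m"
  shows "\<exists>C (m::nat). 0 \<le> C \<and> (\<forall>k\<in>K. \<forall>y. \<bar>F k y\<bar> \<le> C * (1 + norm y) ^ m)"
  using assms(1)
proof induction
  case empty
  then show ?case by (intro exI[of _ 0]) auto
next
  case (insert k K)
  then obtain C m where C: "0 \<le> C" "\<forall>k\<in>K. \<forall>y. \<bar>F k y\<bar> \<le> C * (1 + norm y) ^ m" by blast
  obtain C' m' where C': "\<forall>y. \<bar>F k y\<bar> \<le> C' * (1 + norm y) ^ m'" using growth by blast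
  have mono: "D * (1 + norm y) ^ n \<le> max C C' * (1 + norm y) ^ max m m'" if "D \<le> max C C'" "n \<le> max m m'"
    for D n and y :: 'a
    using that C(1) by (intro mult_mono power_increasing) auto
  have "\<bar>F k' y\<bar> \<le> max C C' * (1 + norm y) ^ max m m'" if "k' \<in> insert k K" for k' y
    using that C(2) C' order_trans[OF _ mono] by fastforce
  then show ?case using C(1) by (intro exI[of _ "max C C'"] exI[of _ "max m m'"]) auto
qed

lemma expinv_uniformly_bounded: "\<exists>M. \<forall>j\<le>n. \<forall>t. \<bar>expinv j t\<bar> \<le> M"
proof (induction n)
  case 0
  then show ?case using expinv_bounded[of 0] by auto
next
  case (Suc n)
  then obtain M where "\<forall>j\<le>n. \<forall>t. \<bar>expinv j t\<bar> \<le> M" by blast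
  moreover obtain M' where "\<forall>t. \<bar>expinv (Suc n) t\<bar> \<le> M'" using expinv_bounded by blast
  ultimately have "\<forall>j\<le>Suc n. \<forall>t. \<bar>expinv j t\<bar> \<le> max M M'"
    by (auto simp: le_Suc_eq le_max_iff_disj)
  then show ?case by blast
qed

lemma wnorm2_le_norm:
  assumes "\<And>l. 1 \<le> lam l"
  shows "wnorm2 lam x \<le> (norm x)^2"
  unfolding wnorm2_def norm_power2_eq_sum
proof (rule sum_mono)
  fix l
  show "(x$l)^2 / lam l \<le> (x$l)^2"
    using assms[of l] by (simp add: divide_le_eq mult_le_cancel_left1)
qed

lemma wnorm2_nonneg:
  assumes "\<And>l. 1 \<le> lam l"
  shows "0 \<le> wnorm2 lam x"
  unfolding wnorm2_def using assms
  by (intro sum_nonneg divide_nonneg_nonneg) (auto intro: order_trans[of 0 1])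

lemma norm_le_wnorm2:
  assumes lam: "\<And>l. 1 \<le> lam l"
  shows "(norm x)^2 / (\<Sum>l\<in>UNIV. lam l) \<le> wnorm2 lam x"
proof -
  have "(x$l)^2 / (\<Sum>l\<in>UNIV. lam l) \<le> (x$l)^2 / lam l" for l
  proof (rule divide_left_mono)
    show "lam l \<le> (\<Sum>l\<in>UNIV. lam l)"
      by (rule member_le_sum) (use lam in \<open>auto intro: order_trans[of 0 1]\<close>)
    then show "0 < (\<Sum>l\<in>UNIV. lam l) * lam l"
      using lam[of l] by (intro mult_pos_pos) linarith+
  qed simp
  then have "(\<Sum>l\<in>UNIV. (x$l)^2 / (\<Sum>l\<in>UNIV. lam l)) \<le> wnorm2 lam x"
    unfolding wnorm2_def by (rule sum_mono)
  then show ?thesis by (simp add: norm_power2_eq_sum sum_divide_distrib)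
qed

lemma norm_sq_norms_le:
  assumes "\<And>l. 1 \<le> lam l"
  shows "norm (sq_norms lam x) \<le> 2 * (norm x)^2"
proof -
  have "norm (sq_norms lam x) \<le> \<bar>sq_norms lam x $ 1\<bar> + \<bar>sq_norms lam x $ 2\<bar>"
    using norm_le_l1_cart[of "sq_norms lam x"] by (simp add: sum_2)
  then show ?thesis
    using wnorm2_le_norm[of lam x, OF assms] wnorm2_nonneg[of lam x, OF assms] by (simp add: sq_norms_def)
qed

lemma abs_Ltil_radial_truncation_le:
  fixes lam :: "'N::finite \<Rightarrow> real"
  assumes lam: "\<And>l. 1 \<le> lam l" and del: "\<And>l. 0 \<le> 1 + del l" "\<And>l. 1 + del l \<le> 1" and a: "0 < a"
    and \<psi>: "poly_growth_smooth \<psi>"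
  obtains K m where "0 \<le> K" "\<And>R x. \<bar>Ltil_radial lam a del (truncation \<psi> R) x\<bar> \<le> K * (1 + 2 * (norm x)^2) ^ m"
proof -
  have sm: "smooth \<psi>" using \<psi> unfolding poly_growth_smooth_def by blast
  have fin: "finite {ks::2 list. set ks \<subseteq> UNIV \<and> length ks \<le> 2}"
    by (rule finite_lists_length_le) simp
  have growth: "\<exists>C (m::nat). \<forall>y. \<bar>pds ks \<psi> y\<bar> \<le> C * (1 + norm y) ^ m" for ks
    using \<psi> unfolding poly_growth_smooth_def by blast
  obtain C m where C0: "0 \<le> C"
    and Cm: "\<forall>ks\<in>{ks. set ks \<subseteq> UNIV \<and> length ks \<le> 2}. \<forall>y. \<bar>pds ks \<psi> y\<bar> \<le> C * (1 + norm y) ^ m"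
    using poly_growth_uniform[where F="\<lambda>ks. pds ks \<psi>", OF fin growth] by blast
  have C: "\<bar>pds ks \<psi> y\<bar> \<le> C * (1 + norm y) ^ m" if "length ks \<le> 2" for ks y
    using Cm that by auto
  obtain M where M: "\<And>j t. j \<le> 2 \<Longrightarrow> \<bar>expinv j t\<bar> \<le> M"
    using expinv_uniformly_bounded by blast
  have M0: "0 \<le> M" using M[of 0 0] by linarith
  define \<Lambda> where "\<Lambda> = (\<Sum>l\<in>UNIV. lam l)"
  have \<Lambda>: "0 \<le> \<Lambda>" unfolding \<Lambda>_def by (rule sum_nonneg) (use lam in \<open>auto intro: order_trans[of 0 1]\<close>)
  show ?thesis
  proof
    show "0 \<le> \<Lambda> * (8*a+4) * (4 * C * M)" using \<Lambda> a C0 M0 by simp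
    fix R and x :: "real^'N"
    let ?r = "1 + 2 * (norm x)^2"
    have r: "1 + norm (sq_norms lam x) \<le> ?r" using norm_sq_norms_le[of lam x, OF lam] by simp
    have "\<bar>Ltil_radial lam a del (truncation \<psi> R) x\<bar>
        \<le> \<Lambda> * (2*a + (8*a+4) * (norm x)^2) * (4 * (C * (1 + norm (sq_norms lam x)) ^ m) * M)"
      unfolding \<Lambda>_def by (intro abs_Ltil_radial_le lam del a abs_pds_truncation_le sm C M)
    also have "\<dots> \<le> \<Lambda> * ((8*a+4) * ?r) * (4 * (C * ?r ^ m) * M)"
      using \<Lambda> a C0 M0 r by (intro mult_mono mult_left_mono power_mono) (auto simp: algebra_simps)
    also have "\<dots> = \<Lambda> * (8*a+4) * (4 * C * M) * ?r ^ Suc m"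
      by (simp add: algebra_simps)
    finally show "\<bar>Ltil_radial lam a del (truncation \<psi> R) x\<bar> \<le> \<Lambda> * (8*a+4) * (4 * C * M) * ?r ^ Suc m" .
  qed
qed

section \<open>Removing the truncation\<close>

lemma Ltil_radial_truncation_eq_0:
  assumes sm: "smooth \<psi>" and R: "R \<le> (norm x)^2"
  shows "Ltil_radial lam a del (truncation \<psi> R) x = 0"
proof -
  have y: "R \<le> sq_norms lam x $ 1" using R by (simp add: sq_norms_1)
  have "pd i (truncation \<psi> R) (sq_norms lam x) = 0" "pd j (pd i (truncation \<psi> R)) (sq_norms lam x) = 0"
    for i j
    using pds_truncation_eq_0[OF sm _ y, of "[i]"] pds_truncation_eq_0[OF sm _ y, of "[j, i]"] by simp_all
  then show ?thesis by (simp add: Ltil_radial_def)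
qed

lemma Ltil_radial_truncation_tendsto:
  assumes sm: "smooth \<psi>"
  shows "(\<lambda>n. Ltil_radial lam a del (truncation \<psi> (real n)) x) \<longlonglongrightarrow> Ltil_radial lam a del \<psi> x"
proof -
  have "(\<lambda>n. pd i (truncation \<psi> (real n)) y) \<longlonglongrightarrow> pd i \<psi> y"
    "(\<lambda>n. pd j (pd i (truncation \<psi> (real n))) y) \<longlonglongrightarrow> pd j (pd i \<psi>) y" for i j y
    using pds_truncation_tendsto[OF sm, of "[i]"] pds_truncation_tendsto[OF sm, of "[j, i]"] by simp_all
  then show ?thesis
    unfolding Ltil_radial_def Let_def divide_inverse by (intro tendsto_intros)
qed

lemma test_fun_truncation:
  assumes "smooth \<psi>"
  shows "test_fun (\<lambda>x. truncation \<psi> R (sq_norms lam x))"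
  unfolding test_fun_def
proof (intro conjI exI allI impI)
  show "smooth (\<lambda>x. truncation \<psi> R (sq_norms lam x))"
    by (intro smooth_comp_sq_norms smooth_truncation assms)
  fix x :: "real^'a" assume "sqrt \<bar>R\<bar> < norm x"
  then have "\<bar>R\<bar> < (norm x)^2"
    using real_sqrt_less_iff[of "\<bar>R\<bar>" "(norm x)^2"] by simp
  then show "truncation \<psi> R (sq_norms lam x) = 0"
    using pds_cutoff_eq_0[of R "sq_norms lam x" "[]"] by (simp add: truncation_def sq_norms_1)
qed

lemma integral_Ltil_truncation_eq_0:
  fixes lam :: "('i::finite \<times> bool) \<Rightarrow> real" and b :: "real^('i \<times> bool) \<Rightarrow> real^('i \<times> bool)"
  assumes stat: "stationary_prob (Leps lam a del b \<kappa> \<epsilon>) \<mu>"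
    and pair: "\<And>i. lam (i,True) = lam (i,False)"
    and orth: "\<And>x. inner x (b x) = 0" and orth_w: "\<And>x. winner lam x (b x) = 0"
    and lam: "\<And>l. 1 \<le> lam l" and del: "\<And>l. 0 \<le> 1 + del l" "\<And>l. 1 + del l \<le> 1" and a: "0 < a"
    and \<psi>: "poly_growth_smooth \<psi>"
  shows "(\<integral>x. Ltil_radial lam a del (truncation \<psi> R) x \<partial>\<mu>) = 0"
proof -
  have sm\<psi>: "smooth \<psi>"
    using \<psi> by (simp add: poly_growth_smooth_def)
  have sm: "smooth (truncation \<psi> R)"
    by (rule smooth_truncation[OF sm\<psi>])
  have L: "Leps lam a del b \<kappa> \<epsilon> (\<lambda>x. truncation \<psi> R (sq_norms lam x)) = Ltil_radial lam a del (truncation \<psi> R)"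
    using Leps_comp_sq_norms[of lam b, OF pair orth orth_w sm] Ltil_comp_sq_norms[OF sm] by simp
  obtain K m where K: "0 \<le> K" "\<And>R x. \<bar>Ltil_radial lam a del (truncation \<psi> R) x\<bar> \<le> K * (1 + 2 * (norm x)^2) ^ m"
    by (rule abs_Ltil_radial_truncation_le[of lam del a \<psi>]) (use lam del a \<psi> in auto)
  have bound: "\<bar>Ltil_radial lam a del (truncation \<psi> R) x\<bar> \<le> K * (1 + 2 * \<bar>R\<bar>) ^ m" for x
  proof (cases "R \<le> (norm x)^2")
    case True
    then show ?thesis using Ltil_radial_truncation_eq_0[OF sm\<psi> True, of lam a del] K(1) by simp
  next
    case False
    then have "(1 + 2 * (norm x)^2) ^ m \<le> (1 + 2 * \<bar>R\<bar>) ^ m"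
      by (intro power_mono) auto
    then show ?thesis using K(1) K(2)[of R x] by (meson mult_left_mono order_trans)
  qed
  have "continuous_on UNIV (Ltil_radial lam a del (truncation \<psi> R))"
    by (rule continuous_on_Ltil_radial[OF sm])
  from stationary_integral_generator_eq_0[OF stat test_fun_truncation[OF sm\<psi>, of R lam], unfolded L, OF this bound]
  show ?thesis .
qed

lemma power_le_exp:
  assumes e: "(\<epsilon>::real) > 0"
  shows "\<exists>C. \<forall>r\<ge>0. (1 + 2*r)^k \<le> C * exp (\<epsilon> * r)"
proof (cases "k = 0")
  case True
  then show ?thesis using e by (intro exI[of _ 1]) auto
next
  case False
  define c where "c = min 1 (\<epsilon> / real k)"
  have c: "0 < c" "real k * c \<le> \<epsilon>"
    using e False by (auto simp: c_def min_def field_simps)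
  have "(1 + 2*r)^k \<le> (2/c)^k * exp (\<epsilon> * r)" if r: "0 \<le> r" for r
  proof -
    have "1 + 2*r \<le> (2/c) * (1 + c*r)"
      using c r by (simp add: c_def field_simps)
    also have "\<dots> \<le> (2/c) * exp (c * r)"
      using c by (intro mult_left_mono) auto
    finally have "(1 + 2*r)^k \<le> ((2/c) * exp (c * r))^k"
      using r by (intro power_mono) auto
    also have "\<dots> = (2/c)^k * exp (real k * (c * r))"
      by (simp only: power_mult_distrib exp_of_nat_mult)
    also have "\<dots> \<le> (2/c)^k * exp (\<epsilon> * r)"
      using c r by (intro mult_left_mono) (auto intro!: mult_right_mono simp: mult.assoc[symmetric])
    finally show ?thesis .
  qed
  then show ?thesis by blast
qed

lemma power_le_exp_wnorm2:
  assumes lam: "\<And>l. 1 \<le> lam l" and a: "0 < a"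
  shows "\<exists>C. \<forall>x. (1 + 2 * (norm x)^2)^m \<le> C * exp (wnorm2 lam x / (2 * a))"
proof -
  define \<Lambda> where "\<Lambda> = (\<Sum>l\<in>UNIV. lam l)"
  have \<Lambda>: "0 < \<Lambda>"
    unfolding \<Lambda>_def using lam by (intro sum_pos) (auto intro: less_le_trans[of 0 1])
  obtain C where C: "\<And>r. 0 \<le> r \<Longrightarrow> (1 + 2*r)^m \<le> C * exp (1 / (2 * a * \<Lambda>) * r)"
    using power_le_exp[of "1 / (2 * a * \<Lambda>)" m] a \<Lambda> by auto
  have "(1 + 2 * (norm x)^2)^m \<le> C * exp (wnorm2 lam x / (2 * a))" for x
  proof -
    have "1 / (2 * a * \<Lambda>) * (norm x)^2 = (norm x)^2 / \<Lambda> / (2 * a)"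
      by simp
    also have "\<dots> \<le> wnorm2 lam x / (2 * a)"
      using norm_le_wnorm2[of lam x, OF lam] a by (intro divide_right_mono) (auto simp: \<Lambda>_def)
    finally have "1 / (2 * a * \<Lambda>) * (norm x)^2 \<le> wnorm2 lam x / (2 * a)" .
    moreover have "0 \<le> C" using C[of 0] by simp
    ultimately have "C * exp (1 / (2 * a * \<Lambda>) * (norm x)^2) \<le> C * exp (wnorm2 lam x / (2 * a))"
      by (intro mult_left_mono) auto
    with C[of "(norm x)^2"] show ?thesis by simp
  qed
  then show ?thesis by blast
qed

lemma integral_eq_0_dominated_limit:
  fixes f :: "nat \<Rightarrow> 'a \<Rightarrow> real"
  assumes meas: "\<And>k. f k \<in> borel_measurable M" and w: "integrable M w"
    and lim: "\<And>x. (\<lambda>k. f k x) \<longlonglongrightarrow> g x" and bound: "\<And>k x. \<bar>f k x\<bar> \<le> w x"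
    and zero: "\<And>k. (\<integral>x. f k x \<partial>M) = 0"
  shows "integrable M g \<and> (\<integral>x. g x \<partial>M) = 0"
proof -
  have gm: "g \<in> borel_measurable M"
    using lim meas by (rule borel_measurable_LIMSEQ_real)
  have "integrable M g"
    by (rule integrable_dominated_convergence[where s=f, OF gm meas w]) (use lim bound in auto)
  moreover have "(\<lambda>k. \<integral>x. f k x \<partial>M) \<longlonglongrightarrow> (\<integral>x. g x \<partial>M)"
    by (rule integral_dominated_convergence[where s=f, OF gm meas w]) (use lim bound in auto)
  ultimately show ?thesis
    using zero LIMSEQ_unique[OF _ tendsto_const] by simp
qed

lemma integral_Ltil_radial_eq_0:
  fixes lam :: "('i::finite \<times> bool) \<Rightarrow> real" and b :: "real^('i \<times> bool) \<Rightarrow> real^('i \<times> bool)"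
  assumes stat: "stationary_prob (Leps lam a del b \<kappa> \<epsilon>) \<mu>"
    and pair: "\<And>i. lam (i,True) = lam (i,False)"
    and orth: "\<And>x. inner x (b x) = 0" and orth_w: "\<And>x. winner lam x (b x) = 0"
    and lam: "\<And>l. 1 \<le> lam l" and del: "\<And>l. 0 \<le> 1 + del l" "\<And>l. 1 + del l \<le> 1" and a: "0 < a"
    and exp_mom: "(\<integral>\<^sup>+x. ennreal (exp (wnorm2 lam x / (2 * a))) \<partial>\<mu>) < \<infinity>"
    and \<psi>: "poly_growth_smooth \<psi>"
  shows "integrable \<mu> (Ltil_radial lam a del \<psi>) \<and> (\<integral>x. Ltil_radial lam a del \<psi> x \<partial>\<mu>) = 0"
proof -
  have sm: "smooth \<psi>" and sets: "sets \<mu> = sets borel"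
    using \<psi> stat by (simp_all add: poly_growth_smooth_def stationary_prob_def)
  have meas: "f \<in> borel_measurable \<mu>" if "continuous_on UNIV f" for f :: "real^('i \<times> bool) \<Rightarrow> real"
    using borel_measurable_continuous_onI[OF that] measurable_cong_sets[OF sets refl] by blast
  obtain K m where K: "0 \<le> K" "\<And>R x. \<bar>Ltil_radial lam a del (truncation \<psi> R) x\<bar> \<le> K * (1 + 2 * (norm x)^2) ^ m"
    by (rule abs_Ltil_radial_truncation_le[of lam del a \<psi>]) (use lam del a \<psi> in auto)
  obtain C where C: "\<And>x. (1 + 2 * (norm x)^2) ^ m \<le> C * exp (wnorm2 lam x / (2 * a))"
    using power_le_exp_wnorm2[of lam a m] lam a by blast
  have "continuous_on UNIV (\<lambda>x. exp (wnorm2 lam x / (2 * a)))"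
    unfolding wnorm2_def divide_inverse by (intro continuous_intros)
  then have exp_int: "integrable \<mu> (\<lambda>x. exp (wnorm2 lam x / (2 * a)))"
    using exp_mom by (intro integrableI_bounded meas) simp_all
  show ?thesis
  proof (rule integral_eq_0_dominated_limit[where f="\<lambda>k. Ltil_radial lam a del (truncation \<psi> (real k))"
        and w="\<lambda>x. K * (C * exp (wnorm2 lam x / (2 * a)))"])
    show "Ltil_radial lam a del (truncation \<psi> (real k)) \<in> borel_measurable \<mu>" for k
      by (intro meas continuous_on_Ltil_radial smooth_truncation sm)
    show "integrable \<mu> (\<lambda>x. K * (C * exp (wnorm2 lam x / (2 * a))))"
      using exp_int by simp
    show "(\<lambda>k. Ltil_radial lam a del (truncation \<psi> (real k)) x) \<longlonglongrightarrow> Ltil_radial lam a del \<psi> x" for x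
      by (rule Ltil_radial_truncation_tendsto[OF sm])
    show "\<bar>Ltil_radial lam a del (truncation \<psi> (real k)) x\<bar> \<le> K * (C * exp (wnorm2 lam x / (2 * a)))" for k x
      using K(2) mult_left_mono[OF C K(1)] by (rule order_trans)
    show "(\<integral>x. Ltil_radial lam a del (truncation \<psi> (real k)) x \<partial>\<mu>) = 0" for k
      by (rule integral_Ltil_truncation_eq_0[of lam a del b \<kappa> \<epsilon> \<mu>, OF stat pair orth orth_w lam del a \<psi>])
  qed
qed

theorem proposition1p5:
  fixes n :: nat
    and lam :: "'i::{finite,linorder} \<Rightarrow> real"
    and a \<kappa> \<epsilon> :: real
    and del :: "'i \<Rightarrow> real"
    and b :: "real^('i \<times> bool) \<Rightarrow> real^('i \<times> bool)"
    and \<mu> :: "(real^('i \<times> bool)) measure"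
    and \<psi> :: "real^2 \<Rightarrow> real"
  defines "lamc \<equiv> (\<lambda>(i::'i, _::bool). lam i)"
      and "delc \<equiv> (\<lambda>(i::'i, _::bool). del i)"
  assumes n: "CARD('i) = n" "n \<ge> 4"
    and lam_mono: "strict_mono lam" and lam_one: "Min (range lam) = 1"
    and a_pos: "a > 0"
    and del_range: "\<forall>i. -1 < del i \<and> del i \<le> 0"
    and b_quad: "\<exists>Q. \<forall>x l. b x $ l = (\<Sum>j\<in>UNIV. \<Sum>k\<in>UNIV. Q l j k * x $ j * x $ k)"
    and b_div: "\<forall>x. divergence b x = 0"
    and b_orth: "\<forall>x. inner x (b x) = 0"
    and b_orth_w: "\<forall>x. winner lamc x (b x) = 0"
    and \<kappa>: "0 < \<kappa>" "\<kappa> \<le> 1"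
    and \<epsilon>: "\<epsilon> > 0"
    and wp: "well_posed_MP (Leps lamc a delc b \<kappa> \<epsilon>)"
    and stat: "stationary_prob (Leps lamc a delc b \<kappa> \<epsilon>) \<mu>"
    and exp_mom: "(\<integral>\<^sup>+x. ennreal (exp (wnorm2 lamc x / (2 * a))) \<partial>\<mu>) < \<infinity>"
    and \<psi>: "poly_growth_smooth \<psi>"
  shows "integrable \<mu> (Ltil lamc a delc (\<lambda>x. \<psi> (vector [(norm x)^2, wnorm2 lamc x])))
       \<and> (\<integral>x. Ltil lamc a delc (\<lambda>x. \<psi> (vector [(norm x)^2, wnorm2 lamc x])) x \<partial>\<mu>) = 0"
proof -
  have lam: "1 \<le> lamc l" for l
  proof -
    obtain i v where "l = (i, v)" by fastforce
    moreover have "Min (range lam) \<le> lam i" by (rule Min_le) auto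
    ultimately show ?thesis using lam_one by (simp add: lamc_def)
  qed
  have pair: "lamc (i, True) = lamc (i, False)" for i
    by (simp add: lamc_def)
  have del: "0 \<le> 1 + delc l" "1 + delc l \<le> 1" for l
    using del_range[rule_format, of "fst l"] by (auto simp: delc_def case_prod_beta)
  have "Ltil lamc a delc (\<lambda>x. \<psi> (vector [(norm x)^2, wnorm2 lamc x])) = Ltil_radial lamc a delc \<psi>"
    using Ltil_comp_sq_norms[of \<psi>] \<psi> by (simp add: sq_norms_def poly_growth_smooth_def)
  moreover have "integrable \<mu> (Ltil_radial lamc a delc \<psi>) \<and> (\<integral>x. Ltil_radial lamc a delc \<psi> x \<partial>\<mu>) = 0"
    by (rule integral_Ltil_radial_eq_0[of lamc a delc b \<kappa> \<epsilon> \<mu>,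
          OF stat pair b_orth[rule_format] b_orth_w[rule_format] lam del a_pos exp_mom \<psi>])
  ultimately show ?thesis by simp
qed

end
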